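(* Let $(Z,\langle\cdot\,,\cdot\rangle_Z)$ be a finite-dimensional real scalar product space with an orthonormal basis $z_1,\ldots,z_n$. Then there exist an admissible $\mathrm{Cl}(Z,\langle\cdot\,,\cdot\rangle_Z)$-module $(V,\langle\cdot\,,\cdot\rangle_V)$ of minimal dimension, with representation $J\colon \mathrm{Cl}(Z,\langle\cdot\,,\cdot\rangle_Z)\to\mathrm{End}(V)$, and an orthonormal basis $v_1,\ldots,v_m$ of $(V,\langle\cdot\,,\cdot\rangle_V)$, such that for all $z\in Z$ and $u,v\in V$ one has $\langle J_zu,J_zv\rangle_V=\langle z,z\rangle_Z\langle u,v\rangle_V$ and $J_z^2=-\langle z,z\rangle_Z\mathrm{Id}_V$, and moreover $$\langle J_{z_k}v_\alpha,v_\beta\rangle_V\in\{1,-1,0\}\quad\text{for all } k=1,\ldots,n,\ \alpha,\beta=1,\ldots,m.$$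
   Context: A scalar product is a real symmetric non-degenerate bilinear form (possibly indefinite); a basis $\{e_i\}$ is orthonormal if $\langle e_i,e_j\rangle=0$ for $i\ne j$ and $\langle e_i,e_i\rangle\in\{\pm1\}$. $\mathrm{Cl}(Z,\langle\cdot\,,\cdot\rangle_Z)$ denotes the Clifford algebra generated by $Z$ with relations $z^2=-\langle z,z\rangle_Z\cdot 1$; a module is a real vector space $V$ with an algebra homomorphism $J$ into $\mathrm{End}(V)$, written $z\mapsto J_z$. The module is admissible if $V$ carries a scalar product $\langle\cdot\,,\cdot\rangle_V$ (an admissible scalar product) such that $\langle J_zu,v\rangle_V=-\langle u,J_zv\rangle_V$ for all $z\in Z$, $u,v\in V$. "Minimal dimension" means minimal dimension among (nonzero) admissible $\mathrm{Cl}(Z,\langle\cdot\,,\cdot\rangle_Z)$-modules. *)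

theory Defs
  imports "HOL-Analysis.Analysis" "HOL-Library.Function_Algebras"
begin

(* Pointwise real vector space structure on functions, so that  nat \<Rightarrow> real
   can serve as an ambient space containing (copies of) every finite-dimensional
   real vector space. *)
instantiation "fun" :: (type, real_vector) real_vector
begin
definition scaleR_fun :: "real \<Rightarrow> ('a \<Rightarrow> 'b) \<Rightarrow> 'a \<Rightarrow> 'b"
  where "scaleR_fun r f = (\<lambda>x. r *\<^sub>R f x)"
instance
  by standard (auto simp: scaleR_fun_def fun_eq_iff scaleR_add_right scaleR_add_left)
end

definition bilinear_on :: "'a::real_vector set \<Rightarrow> ('a \<Rightarrow> 'a \<Rightarrow> real) \<Rightarrow> bool" where
  "bilinear_on S f \<longleftrightarrow>
     (\<forall>x\<in>S. \<forall>y\<in>S. \<forall>w\<in>S. \<forall>a b.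
        f (a *\<^sub>R x + b *\<^sub>R y) w = a * f x w + b * f y w \<and>
        f w (a *\<^sub>R x + b *\<^sub>R y) = a * f w x + b * f w y)"

definition scalar_product_on :: "'a::real_vector set \<Rightarrow> ('a \<Rightarrow> 'a \<Rightarrow> real) \<Rightarrow> bool" where
  "scalar_product_on S f \<longleftrightarrow>
     subspace S \<and> bilinear_on S f \<and>
     (\<forall>x\<in>S. \<forall>y\<in>S. f x y = f y x) \<and>
     (\<forall>x\<in>S. (\<forall>y\<in>S. f x y = 0) \<longrightarrow> x = 0)"

definition orthonormal_basis_on ::
  "'a::real_vector set \<Rightarrow> ('a \<Rightarrow> 'a \<Rightarrow> real) \<Rightarrow> nat \<Rightarrow> (nat \<Rightarrow> 'a) \<Rightarrow> bool" where
  "orthonormal_basis_on S f n e \<longleftrightarrow>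
     (\<forall>i<n. e i \<in> S) \<and> inj_on e {..<n} \<and> independent (e ` {..<n}) \<and>
     span (e ` {..<n}) = S \<and>
     (\<forall>i<n. \<forall>j<n. i \<noteq> j \<longrightarrow> f (e i) (e j) = 0) \<and>
     (\<forall>i<n. f (e i) (e i) = 1 \<or> f (e i) (e i) = -1)"

(* A module over Cl(Z,B) on the subspace V, given (via the universal property of the
   Clifford algebra) by a linear map z \<mapsto> J z from Z to End(V) with
   (J z)^2 = - B z z Id_V; such maps correspond exactly to (unital) algebra
   homomorphisms Cl(Z,B) \<rightarrow> End(V). *)
definition clifford_module ::
  "'z::real_vector set \<Rightarrow> ('z \<Rightarrow> 'z \<Rightarrow> real) \<Rightarrow> 'v::real_vector set \<Rightarrow> ('z \<Rightarrow> 'v \<Rightarrow> 'v) \<Rightarrow> bool" where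
  "clifford_module Z B V J \<longleftrightarrow>
     subspace V \<and>
     (\<forall>z\<in>Z. \<forall>u\<in>V. J z u \<in> V) \<and>
     (\<forall>z\<in>Z. \<forall>u\<in>V. \<forall>w\<in>V. \<forall>a b. J z (a *\<^sub>R u + b *\<^sub>R w) = a *\<^sub>R J z u + b *\<^sub>R J z w) \<and>
     (\<forall>z\<in>Z. \<forall>z'\<in>Z. \<forall>u\<in>V. \<forall>a b. J (a *\<^sub>R z + b *\<^sub>R z') u = a *\<^sub>R J z u + b *\<^sub>R J z' u) \<and>
     (\<forall>z\<in>Z. \<forall>u\<in>V. J z (J z u) = - (B z z *\<^sub>R u))"

definition admissible_module ::
  "'z::real_vector set \<Rightarrow> ('z \<Rightarrow> 'z \<Rightarrow> real) \<Rightarrow> 'v::real_vector set \<Rightarrow> ('z \<Rightarrow> 'v \<Rightarrow> 'v)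
     \<Rightarrow> ('v \<Rightarrow> 'v \<Rightarrow> real) \<Rightarrow> bool" where
  "admissible_module Z B V J g \<longleftrightarrow>
     clifford_module Z B V J \<and> scalar_product_on V g \<and>
     (\<forall>z\<in>Z. \<forall>u\<in>V. \<forall>w\<in>V. g (J z u) w = - g u (J z w))"

end

theory Submission
  imports Defs "HOL-Library.Nat_Bijection"
begin

text \<open>The Clifford algebra acts on itself by left multiplication, so finite-dimensional admissible
  modules exist; let \<open>W\<close> be one of minimal dimension. Up to sign, the monomials
  \<open>J\<^sub>I = J\<^sub>i\<^sub>1 \<circ> \<dots> \<circ> J\<^sub>i\<^sub>r\<close> in the basis vectors are closed under composition
  and adjunction, and each squares to \<open>\<plusminus>1\<close>. Call \<open>w\<close> good if \<open>g w w \<noteq> 0\<close> and,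
  for every \<open>I\<close>, either \<open>J\<^sub>I w = \<plusminus>w\<close> or \<open>g w (J\<^sub>I w) = 0\<close>. Then the
  vectors \<open>J\<^sub>I w\<close>, normalised and taken once per pair \<open>\<plusminus>v\<close>, are orthonormal, are permuted up
  to sign by each \<open>J\<^sub>z\<^sub>k\<close>, and span a submodule \<open>V \<subseteq> W\<close>, which is again minimal.

  A good vector lies in any subspace \<open>X\<close> of least dimension among the nondegenerate nonzero
  subspaces that are, for each \<open>I\<close>, either \<open>J\<^sub>I\<close>-invariant or \<open>J\<^sub>I\<close>-isotropic: a
  self-adjoint involution \<open>J\<^sub>I\<close> preserving \<open>X\<close> must act on \<open>X\<close> as \<open>\<plusminus>1\<close>, since its
  eigenspaces would be smaller such subspaces, and the self-adjoint \<open>J\<^sub>I\<close> with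
  \<open>J\<^sub>I\<^sup>2 = -1\<close> preserving \<open>X\<close> are made isotropic one after another by rotating \<open>w\<close> in the
  plane of \<open>w\<close> and \<open>J\<^sub>I w\<close>; the ones treated earlier anticommute with the current one,
  because commuting ones are proportional on \<open>X\<close>.\<close>

lemma dim_mono_finite_span:
  fixes V W :: "'a::real_vector set"
  assumes "V \<subseteq> W" "finite S" "W \<subseteq> span S"
  shows "dim V \<le> dim W"
proof -
  obtain B where B: "B \<subseteq> V" "independent B" "V \<subseteq> span B" "card B = dim V"
    using basis_exists by blast
  obtain C where C: "C \<subseteq> W" "independent C" "W \<subseteq> span C" "card C = dim W"
    using basis_exists by blast
  have "finite C" using independent_span_bound[OF assms(2) C(2)] C(1) assms(3) by blast
  moreover have "B \<subseteq> span C" using B(1) assms(1) C(3) by blast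
  ultimately have "card B \<le> card C" using independent_span_bound B(2) by blast
  then show ?thesis using B C by simp
qed

lemma dim_strict_mono_finite_span:
  fixes V W :: "'a::real_vector set"
  assumes "V \<subset> W" "subspace V" "finite S" "W \<subseteq> span S"
  shows "dim V < dim W"
proof -
  obtain B where B: "B \<subseteq> V" "independent B" "V \<subseteq> span B" "card B = dim V"
    using basis_exists by blast
  obtain x where x: "x \<in> W" "x \<notin> V" using assms(1) by blast
  have "x \<notin> span B" using x B(1) assms(2) span_minimal by blast
  then have ind: "independent (insert x B)" using independent_insertI B(2) by blast
  have fin: "finite B" using independent_span_bound[OF assms(3) B(2)] B(1) assms(1,4) by blast
  have "dim (insert x B) \<le> dim W"
    using dim_mono_finite_span[of "insert x B" W S] x B(1) assms by blast
  moreover have "dim (insert x B) = card B + 1"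
    using dim_eq_card_independent[OF ind] fin x B(1) by (metis card_insert_disjoint Suc_eq_plus1 subsetD)
  ultimately show ?thesis using B(4) by simp
qed

lemma sum_sum_eq_diagonal_if_antisymmetric:
  fixes a :: "nat \<Rightarrow> nat \<Rightarrow> 'a::real_vector"
  assumes "\<And>k j. k < n \<Longrightarrow> j < n \<Longrightarrow> k \<noteq> j \<Longrightarrow> a k j + a j k = 0"
  shows "(\<Sum>k<n. \<Sum>j<n. a k j) = (\<Sum>k<n. a k k)"
proof -
  have off_diagonal: "(\<Sum>j<n. a k j + a j k) = a k k + a k k" if "k < n" for k
  proof -
    have "(\<Sum>j<n. a k j + a j k) = (a k k + a k k) + (\<Sum>j\<in>{..<n} - {k}. a k j + a j k)"
      using that by (subst sum.remove[of _ k]) auto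
    also have "(\<Sum>j\<in>{..<n} - {k}. a k j + a j k) = 0"
      using that assms by (intro sum.neutral) auto
    finally show ?thesis by simp
  qed
  have "(2::real) *\<^sub>R (\<Sum>k<n. \<Sum>j<n. a k j) = (\<Sum>k<n. \<Sum>j<n. a k j) + (\<Sum>j<n. \<Sum>k<n. a k j)"
    by (simp only: scaleR_2 sum.swap[of "\<lambda>k j. a k j" "{..<n}" "{..<n}"])
  also have "\<dots> = (\<Sum>k<n. \<Sum>j<n. a k j + a j k)"
    by (simp only: sum.distrib)
  also have "\<dots> = (\<Sum>k<n. a k k + a k k)"
    by (rule sum.cong[OF refl]) (simp add: off_diagonal)
  also have "\<dots> = (2::real) *\<^sub>R (\<Sum>k<n. a k k)"
    by (simp only: scaleR_2 sum.distrib)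
  finally show ?thesis by simp
qed

lemma sum_Pow_remove:
  fixes \<phi> :: "'a set \<Rightarrow> 'b::comm_monoid_add"
  assumes "k \<in> N" "finite N"
  shows "(\<Sum>T\<in>Pow N. \<phi> T) = (\<Sum>T\<in>Pow (N - {k}). \<phi> T + \<phi> (insert k T))"
proof -
  define M where "M = N - {k}"
  have N: "N = insert k M" and kM: "k \<notin> M" and fM: "finite M"
    using assms by (auto simp: M_def)
  have inj: "inj_on (insert k) (Pow M)"
    by (rule inj_onI) (use kM in \<open>auto simp: insert_ident\<close>)
  have "(\<Sum>T\<in>Pow N. \<phi> T) = (\<Sum>T\<in>Pow M. \<phi> T) + (\<Sum>T\<in>insert k ` Pow M. \<phi> T)"
    unfolding N Pow_insert by (rule sum.union_disjoint) (use fM kM in auto)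
  also have "(\<Sum>T\<in>insert k ` Pow M. \<phi> T) = (\<Sum>T\<in>Pow M. \<phi> (insert k T))"
    by (rule sum.reindex[OF inj, unfolded comp_def])
  finally show ?thesis by (simp add: M_def sum.distrib)
qed

lemma finite_sign_representatives:
  fixes Xs :: "'a::group_add set"
  assumes "finite Xs"
  obtains R where "R \<subseteq> Xs" "\<And>x. x \<in> Xs \<Longrightarrow> \<exists>r\<in>R. x = r \<or> x = - r"
    "\<And>r r'. r \<in> R \<Longrightarrow> r' \<in> R \<Longrightarrow> r' = - r \<Longrightarrow> r' = r"
proof -
  have "\<exists>R\<subseteq>Xs. (\<forall>x\<in>Xs. \<exists>r\<in>R. x = r \<or> x = - r) \<and> (\<forall>r\<in>R. \<forall>r'\<in>R. r' = - r \<longrightarrow> r' = r)"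
    using assms
  proof (induction Xs rule: finite_induct)
    case empty
    show ?case by blast
  next
    case (insert x Xs)
    then obtain R where R: "R \<subseteq> Xs" "\<forall>y\<in>Xs. \<exists>r\<in>R. y = r \<or> y = - r"
      "\<forall>r\<in>R. \<forall>r'\<in>R. r' = - r \<longrightarrow> r' = r" by blast
    show ?case
    proof (cases "\<exists>r\<in>R. x = r \<or> x = - r")
      case True
      then show ?thesis using R by (intro exI[of _ R]) auto
    next
      case False
      have "\<forall>r\<in>insert x R. \<forall>r'\<in>insert x R. r' = - r \<longrightarrow> r' = r"
        using R(3) False by (metis insert_iff minus_minus)
      then show ?thesis using R by (intro exI[of _ "insert x R"]) auto
    qed
  qed
  then show ?thesis using that by blast
qed

definition is_sign :: "real \<Rightarrow> bool" where
  "is_sign s \<longleftrightarrow> s = 1 \<or> s = -1"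

lemma is_sign_1 [simp]: "is_sign 1"
  and is_sign_minus_1 [simp]: "is_sign (-1)"
  by (auto simp: is_sign_def)

lemma is_sign_mult: "is_sign a \<Longrightarrow> is_sign b \<Longrightarrow> is_sign (a * b)"
  and is_sign_uminus: "is_sign a \<Longrightarrow> is_sign (- a)"
  and is_sign_square: "is_sign a \<Longrightarrow> a * a = 1"
  and is_sign_nonzero: "is_sign a \<Longrightarrow> a \<noteq> 0"
  by (auto simp: is_sign_def)

lemma scaleR_fun_apply: "(c *\<^sub>R f) x = c * f x" for f :: "'a \<Rightarrow> real"
  by (simp add: scaleR_fun_def)

lemma sum_fun_apply: "(sum F A) x = (\<Sum>a\<in>A. F a x)"
  by (induction A rule: infinite_finite_induct) auto

locale orthonormal_basis_setup =
  fixes B :: "'z::real_vector \<Rightarrow> 'z \<Rightarrow> real" and n :: nat and zb :: "nat \<Rightarrow> 'z"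
  assumes scalar_product: "scalar_product_on UNIV B"
    and orthonormal: "orthonormal_basis_on UNIV B n zb"
begin

definition sig :: "nat \<Rightarrow> real" where
  "sig k = B (zb k) (zb k)"

lemma sig_sign: "k < n \<Longrightarrow> is_sign (sig k)"
  using orthonormal by (auto simp: orthonormal_basis_on_def sig_def is_sign_def)

lemma B_bilinear: "B (a *\<^sub>R x + b *\<^sub>R y) w = a * B x w + b * B y w"
  "B w (a *\<^sub>R x + b *\<^sub>R y) = a * B w x + b * B w y"
  using scalar_product by (simp_all add: scalar_product_on_def bilinear_on_def)

lemma B_sym: "B x y = B y x"
  using scalar_product by (simp add: scalar_product_on_def)

lemma B_basis_orthogonal: "j < n \<Longrightarrow> k < n \<Longrightarrow> j \<noteq> k \<Longrightarrow> B (zb j) (zb k) = 0"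
  using orthonormal by (auto simp: orthonormal_basis_on_def)

lemma B_add_basis: 
  assumes "j < n" "k < n" "j \<noteq> k"
  shows "B (zb j + zb k) (zb j + zb k) = sig j + sig k"
  using B_bilinear(1)[of 1 "zb j" 1 "zb k"] B_bilinear(2)[of _ 1 "zb j" 1 "zb k"]
    B_basis_orthogonal[OF assms] B_sym[of "zb j" "zb k"]
  by (simp add: sig_def)

lemma B_sum_left: "B (\<Sum>k\<in>A. \<alpha> k *\<^sub>R zb k) y = (\<Sum>k\<in>A. \<alpha> k * B (zb k) y)"
proof (induction A rule: infinite_finite_induct)
  case (insert a A)
  then show ?case using B_bilinear(1)[of "\<alpha> a" "zb a" 1 "\<Sum>k\<in>A. \<alpha> k *\<^sub>R zb k" y] by simp
qed (use B_bilinear(1)[of 0 0 0 0 y] in simp_all)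

definition coord :: "nat \<Rightarrow> 'z \<Rightarrow> real" where
  "coord k z = sig k * B z (zb k)"

lemma coord_linear: "coord k (a *\<^sub>R z + b *\<^sub>R z') = a * coord k z + b * coord k z'"
  by (simp add: coord_def B_bilinear algebra_simps)

lemma B_diag_eq_sum_coord: "B z z = (\<Sum>k<n. coord k z * coord k z * sig k)"
proof -
  have "z \<in> span (zb ` {..<n})" and inj: "inj_on zb {..<n}"
    using orthonormal by (simp_all add: orthonormal_basis_on_def)
  then obtain u where "z = (\<Sum>v\<in>zb ` {..<n}. u v *\<^sub>R v)"
    using span_finite[of "zb ` {..<n}"] by auto
  then have z: "z = (\<Sum>k<n. u (zb k) *\<^sub>R zb k)"
    by (simp add: sum.reindex[OF inj])
  have B_z_basis: "B z (zb j) = u (zb j) * sig j" if "j < n" for j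
  proof -
    have "B z (zb j) = (\<Sum>k<n. u (zb k) * B (zb k) (zb j))"
      by (subst z) (rule B_sum_left)
    also have "\<dots> = u (zb j) * B (zb j) (zb j)"
      using that by (subst sum.remove[of _ j]) (auto intro!: sum.neutral simp: B_basis_orthogonal)
    finally show ?thesis by (simp add: sig_def)
  qed
  have coord_z: "coord j z = u (zb j)" if "j < n" for j
    using B_z_basis[OF that] is_sign_square[OF sig_sign[OF that]] by (simp add: coord_def)
  have "B z z = (\<Sum>k<n. u (zb k) * B (zb k) z)"
    by (subst (1) z) (rule B_sum_left)
  also have "\<dots> = (\<Sum>k<n. coord k z * coord k z * sig k)"
    by (rule sum.cong[OF refl]) (simp add: B_sym[of "zb _" z] B_z_basis coord_z)
  finally show ?thesis .
qed

end

section \<open>The regular representation\<close>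

definition clifford_sign :: "nat \<Rightarrow> nat set \<Rightarrow> real" where
  "clifford_sign k T = (-1) ^ card {i\<in>T. i < k}"

lemma clifford_sign_square: "clifford_sign k T * clifford_sign k T = 1"
  by (simp add: clifford_sign_def power_mult_distrib[symmetric] flip: power_add)

lemma clifford_sign_remove:
  assumes "finite T"
  shows "clifford_sign k (T - {j}) = (if j \<in> T \<and> j < k then - clifford_sign k T else clifford_sign k T)"
proof -
  have eq: "{i\<in>T - {j}. i < k} = {i\<in>T. i < k} - {j}" by auto
  show ?thesis
  proof (cases "j \<in> T \<and> j < k")
    case True
    then have card: "card {i\<in>T. i < k} = Suc (card ({i\<in>T. i < k} - {j}))"
      using assms by (intro card_Suc_Diff1[symmetric]) auto
    show ?thesis using True unfolding clifford_sign_def eq card by simp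
  next
    case False
    then have "{i\<in>T. i < k} - {j} = {i\<in>T. i < k}" by auto
    then show ?thesis using False unfolding clifford_sign_def eq by simp
  qed
qed

lemma clifford_sign_insert:
  assumes "finite T"
  shows "clifford_sign k (insert j T) = (if j \<notin> T \<and> j < k then - clifford_sign k T else clifford_sign k T)"
proof (cases "j \<in> T")
  case False
  have "clifford_sign k T = clifford_sign k (insert j T - {j})" using False by simp
  also have "\<dots> = (if j < k then - clifford_sign k (insert j T) else clifford_sign k (insert j T))"
    using clifford_sign_remove[of "insert j T" k j] assms by simp
  finally show ?thesis using False by (auto simp: clifford_sign_def)
qed (simp add: insert_absorb)

context orthonormal_basis_setup
begin

text \<open>If \<open>F\<close> lists the coordinates of an element of the Clifford algebra in the basis of
  ordered monomials \<open>z\<^sub>T\<close> (the product of the \<open>zb i\<close>, \<open>i \<in> T\<close>, in increasing order),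
  then \<open>left_mult k F\<close> lists those of its product with \<open>zb k\<close> from the left.\<close>

definition left_mult :: "nat \<Rightarrow> (nat set \<Rightarrow> real) \<Rightarrow> nat set \<Rightarrow> real" where
  "left_mult k F T =
     clifford_sign k T * (if k \<in> T then F (T - {k}) else - sig k * F (insert k T))"

lemma left_mult_square:
  assumes "finite T"
  shows "left_mult k (left_mult k F) T = - sig k * F T"
proof (cases "k \<in> T")
  case True
  then have "left_mult k (left_mult k F) T
      = (clifford_sign k T * clifford_sign k T) * (- sig k * F T)"
    using assms by (simp add: left_mult_def clifford_sign_remove insert_absorb)
  then show ?thesis by (simp add: clifford_sign_square)
next
  case False
  then have "left_mult k (left_mult k F) T
      = (clifford_sign k T * clifford_sign k T) * (- sig k * F T)"
    using assms by (simp add: left_mult_def clifford_sign_insert)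
  then show ?thesis by (simp add: clifford_sign_square)
qed

lemma left_mult_anticommute:
  assumes "finite T" "j \<noteq> k"
  shows "left_mult j (left_mult k F) T = - left_mult k (left_mult j F) T"
proof -
  have "T - {j} - {k} = T - {k} - {j}" "insert k (T - {j}) = insert k T - {j}"
    "insert j (T - {k}) = insert j T - {k}" "insert j (insert k T) = insert k (insert j T)"
    using assms(2) by auto
  then show ?thesis using assms
    by (cases "j \<in> T"; cases "k \<in> T"; cases "j < k")
      (auto simp: left_mult_def clifford_sign_remove clifford_sign_insert)
qed

text \<open>Coordinate functions on finite sets are stored in \<open>nat \<Rightarrow> real\<close> through
  \<open>set_encode\<close>; \<open>regular_space\<close> consists of those supported on subsets of \<open>{..<n}\<close>.\<close>

definition regular_space :: "(nat \<Rightarrow> real) set" where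
  "regular_space = {f. \<forall>a. \<not> set_decode a \<subseteq> {..<n} \<longrightarrow> f a = 0}"

definition regular_gen :: "nat \<Rightarrow> (nat \<Rightarrow> real) \<Rightarrow> nat \<Rightarrow> real" where
  "regular_gen k f = (\<lambda>a. left_mult k (\<lambda>T. f (set_encode T)) (set_decode a))"

definition regular_rep :: "'z \<Rightarrow> (nat \<Rightarrow> real) \<Rightarrow> nat \<Rightarrow> real" where
  "regular_rep z f = (\<Sum>k<n. coord k z *\<^sub>R regular_gen k f)"

definition sig_prod :: "nat set \<Rightarrow> real" where
  "sig_prod T = (\<Prod>i\<in>T. sig i)"

definition regular_form :: "(nat \<Rightarrow> real) \<Rightarrow> (nat \<Rightarrow> real) \<Rightarrow> real" where
  "regular_form f h = (\<Sum>T\<in>Pow {..<n}. sig_prod T * f (set_encode T) * h (set_encode T))"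

lemma regular_gen_set_encode:
  "finite T \<Longrightarrow> regular_gen k f (set_encode T) = left_mult k (\<lambda>T. f (set_encode T)) T"
  by (simp add: regular_gen_def)

lemma left_mult_cong:
  "(\<And>S. finite S \<Longrightarrow> G S = G' S) \<Longrightarrow> finite T \<Longrightarrow> left_mult k G T = left_mult k G' T"
  by (simp add: left_mult_def)

lemma regular_gen_regular_gen:
  "regular_gen j (regular_gen k f) a
     = left_mult j (left_mult k (\<lambda>T. f (set_encode T))) (set_decode a)"
  unfolding regular_gen_def[of j] by (rule left_mult_cong) (simp_all add: regular_gen_set_encode)

lemma linear_regular_gen: "linear (regular_gen k)"
  by (rule linearI) (auto simp: regular_gen_def left_mult_def scaleR_fun_apply fun_eq_iff algebra_simps)

lemma regular_gen_square: "regular_gen k (regular_gen k f) = (- sig k) *\<^sub>R f"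
proof
  fix a
  have "regular_gen k (regular_gen k f) a = - sig k * f (set_encode (set_decode a))"
    unfolding regular_gen_regular_gen
    using left_mult_square[of "set_decode a" k "\<lambda>T. f (set_encode T)"] by simp
  then show "regular_gen k (regular_gen k f) a = ((- sig k) *\<^sub>R f) a"
    by (simp only: set_decode_inverse scaleR_fun_apply)
qed

lemma regular_gen_anticommute:
  "j \<noteq> k \<Longrightarrow> regular_gen j (regular_gen k f) + regular_gen k (regular_gen j f) = 0"
proof
  fix a
  assume "j \<noteq> k"
  then have "regular_gen j (regular_gen k f) a = - regular_gen k (regular_gen j f) a"
    unfolding regular_gen_regular_gen by (intro left_mult_anticommute) simp_all
  then show "(regular_gen j (regular_gen k f) + regular_gen k (regular_gen j f)) a = 0 a"
    by simp
qed

lemma linear_regular_rep: "linear (regular_rep z)"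
  unfolding regular_rep_def
  by (intro linear_compose_sum ballI linear_compose_scale_right linear_regular_gen)

lemma regular_rep_add_scale:
  "regular_rep (a *\<^sub>R z + b *\<^sub>R z') f = a *\<^sub>R regular_rep z f + b *\<^sub>R regular_rep z' f"
  by (simp add: regular_rep_def coord_linear scaleR_sum_right sum.distrib scaleR_add_left)

lemma regular_rep_square: "regular_rep z (regular_rep z f) = - (B z z *\<^sub>R f)"
proof -
  have "regular_rep z (regular_rep z f)
      = (\<Sum>k<n. coord k z *\<^sub>R regular_gen k (\<Sum>j<n. coord j z *\<^sub>R regular_gen j f))"
    by (simp only: regular_rep_def)
  also have "\<dots> = (\<Sum>k<n. \<Sum>j<n. (coord k z * coord j z) *\<^sub>R regular_gen k (regular_gen j f))"
    by (simp add: linear_sum[OF linear_regular_gen] linear_scale[OF linear_regular_gen] scaleR_sum_right)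
  also have "\<dots> = (\<Sum>k<n. (coord k z * coord k z) *\<^sub>R regular_gen k (regular_gen k f))"
  proof (rule sum_sum_eq_diagonal_if_antisymmetric)
    fix k j :: nat assume "k \<noteq> j"
    then show "(coord k z * coord j z) *\<^sub>R regular_gen k (regular_gen j f)
        + (coord j z * coord k z) *\<^sub>R regular_gen j (regular_gen k f) = 0"
      using regular_gen_anticommute[OF \<open>k \<noteq> j\<close>, of f]
      by (simp only: mult.commute[of "coord j z"] scaleR_add_right[symmetric] scaleR_zero_right)
  qed
  also have "\<dots> = (\<Sum>k<n. (- (coord k z * coord k z * sig k)) *\<^sub>R f)"
    by (simp add: regular_gen_square)
  also have "\<dots> = - (B z z *\<^sub>R f)"
    by (simp only: B_diag_eq_sum_coord scaleR_sum_left[symmetric] sum_negf scaleR_minus_left)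
  finally show ?thesis .
qed

lemma subspace_regular_space: "subspace regular_space"
  unfolding subspace_def regular_space_def by (auto simp: scaleR_fun_apply)

lemma regular_gen_in_regular_space:
  assumes "k < n" "f \<in> regular_space"
  shows "regular_gen k f \<in> regular_space"
  unfolding regular_space_def
proof (intro CollectI allI impI)
  fix a assume a: "\<not> set_decode a \<subseteq> {..<n}"
  define T where "T = set_decode a"
  have "\<not> T - {k} \<subseteq> {..<n}" "\<not> insert k T \<subseteq> {..<n}"
    using a assms(1) by (auto simp: T_def)
  then have "f (set_encode (T - {k})) = 0" "f (set_encode (insert k T)) = 0"
    using assms(2) by (auto simp: regular_space_def T_def)
  then show "regular_gen k f a = 0"
    by (simp add: regular_gen_def left_mult_def T_def[symmetric])
qed

lemma regular_rep_in_regular_space: "f \<in> regular_space \<Longrightarrow> regular_rep z f \<in> regular_space"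
  unfolding regular_rep_def using subspace_regular_space regular_gen_in_regular_space
  by (intro subspace_sum) (auto intro: subspace_scale)

lemma linear_regular_form_left: "linear (\<lambda>f. regular_form f h)"
  by (rule linearI) (simp_all add: regular_form_def scaleR_fun_apply sum.distrib sum_distrib_left algebra_simps)

lemma regular_form_sym: "regular_form f h = regular_form h f"
  unfolding regular_form_def by (simp add: mult.commute mult.left_commute)

lemma sig_prod_insert: "finite T \<Longrightarrow> k \<notin> T \<Longrightarrow> sig_prod (insert k T) = sig k * sig_prod T"
  by (simp add: sig_prod_def)

lemma sig_prod_nonzero: "T \<subseteq> {..<n} \<Longrightarrow> sig_prod T \<noteq> 0"
  using sig_sign is_sign_nonzero finite_subset[of T "{..<n}"]
  by (auto simp: sig_prod_def prod_zero_iff)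

text \<open>The weights \<open>sig_prod\<close> make left multiplication by each \<open>zb k\<close> skew: splitting
  the sum into the pairs \<open>T\<close>, \<open>insert k T\<close> with \<open>k \<notin> T\<close>, the two terms of a pair are
  exchanged with opposite signs.\<close>

lemma regular_form_regular_gen_skew:
  assumes "k < n"
  shows "regular_form (regular_gen k f) h = - regular_form f (regular_gen k h)"
proof -
  define F H where "F = (\<lambda>T. f (set_encode T))" and "H = (\<lambda>T. h (set_encode T))"
  have kN: "k \<in> {..<n}" and fin: "\<And>T. T \<in> Pow {..<n} \<Longrightarrow> finite T"
    using assms finite_subset by auto
  have "regular_form (regular_gen k f) h = (\<Sum>T\<in>Pow {..<n}. sig_prod T * left_mult k F T * H T)"
    unfolding regular_form_def F_def H_def by (rule sum.cong) (simp_all add: regular_gen_set_encode fin)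
  also have "\<dots> = (\<Sum>T\<in>Pow ({..<n} - {k}). sig_prod T * left_mult k F T * H T
      + sig_prod (insert k T) * left_mult k F (insert k T) * H (insert k T))"
    by (rule sum_Pow_remove[OF kN]) simp
  also have "\<dots> = (\<Sum>T\<in>Pow ({..<n} - {k}). - (sig_prod T * F T * left_mult k H T
      + sig_prod (insert k T) * F (insert k T) * left_mult k H (insert k T)))"
  proof (rule sum.cong[OF refl])
    fix T assume T: "T \<in> Pow ({..<n} - {k})"
    then have "finite T" "k \<notin> T" "insert k T - {k} = T" using finite_subset by auto
    then show "sig_prod T * left_mult k F T * H T
        + sig_prod (insert k T) * left_mult k F (insert k T) * H (insert k T)
      = - (sig_prod T * F T * left_mult k H T
        + sig_prod (insert k T) * F (insert k T) * left_mult k H (insert k T))"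
      by (simp add: left_mult_def sig_prod_insert clifford_sign_insert algebra_simps)
  qed
  also have "\<dots> = - (\<Sum>T\<in>Pow {..<n}. sig_prod T * F T * left_mult k H T)"
    by (subst sum_Pow_remove[OF kN]) (simp_all only: sum_negf finite_lessThan)
  also have "(\<Sum>T\<in>Pow {..<n}. sig_prod T * F T * left_mult k H T) = regular_form f (regular_gen k h)"
    unfolding regular_form_def F_def H_def by (rule sum.cong) (simp_all add: regular_gen_set_encode fin)
  finally show ?thesis .
qed

lemma regular_form_regular_rep_skew:
  "regular_form (regular_rep z f) h = - regular_form f (regular_rep z h)"
proof -
  have "regular_form (regular_rep z f) h = (\<Sum>k<n. coord k z * regular_form (regular_gen k f) h)"
    unfolding regular_rep_def
    by (simp add: linear_sum[OF linear_regular_form_left] linear_scale[OF linear_regular_form_left] o_def)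
  also have "\<dots> = - (\<Sum>k<n. coord k z * regular_form (regular_gen k h) f)"
    by (simp add: regular_form_regular_gen_skew regular_form_sym[of f] sum_negf)
  also have "(\<Sum>k<n. coord k z * regular_form (regular_gen k h) f) = regular_form (regular_rep z h) f"
    unfolding regular_rep_def
    by (simp add: linear_sum[OF linear_regular_form_left] linear_scale[OF linear_regular_form_left] o_def)
  finally show ?thesis by (simp add: regular_form_sym)
qed

lemma indicator_in_regular_space:
  "set_decode a \<subseteq> {..<n} \<Longrightarrow> (indicator {a} :: nat \<Rightarrow> real) \<in> regular_space"
  by (auto simp: regular_space_def indicator_def)

lemma regular_form_indicator:
  assumes "T \<subseteq> {..<n}"
  shows "regular_form f (indicator {set_encode T}) = sig_prod T * f (set_encode T)"
proof -
  have "S \<subseteq> {..<n} \<Longrightarrow> set_encode S = set_encode T \<longleftrightarrow> S = T" for S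
    using assms by (intro set_encode_eq) (auto intro: finite_subset)
  then have "regular_form f (indicator {set_encode T})
      = (\<Sum>S\<in>Pow {..<n}. if S = T then sig_prod S * f (set_encode S) else 0)"
    unfolding regular_form_def by (intro sum.cong) (auto simp: indicator_def)
  also have "\<dots> = sig_prod T * f (set_encode T)" using assms by simp
  finally show ?thesis .
qed

lemma regular_form_nondegenerate:
  assumes "f \<in> regular_space" "\<forall>h\<in>regular_space. regular_form f h = 0"
  shows "f = 0"
proof
  fix a
  show "f a = 0 a"
  proof (cases "set_decode a \<subseteq> {..<n}")
    case True
    then have "sig_prod (set_decode a) * f a = 0"
      using assms(2) indicator_in_regular_space regular_form_indicator[of "set_decode a" f] by simp
    then show ?thesis using sig_prod_nonzero[OF True] by simp
  qed (use assms(1) in \<open>simp add: regular_space_def\<close>)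
qed

lemma span_indicators_regular_space:
  "span ((\<lambda>T. indicator {set_encode T}) ` Pow {..<n}) = regular_space"
proof
  show "span ((\<lambda>T. indicator {set_encode T}) ` Pow {..<n}) \<subseteq> regular_space"
    using subspace_regular_space
    by (intro span_minimal)
      (auto intro!: indicator_in_regular_space simp: set_encode_inverse finite_subset[of _ "{..<n}"])
  show "regular_space \<subseteq> span ((\<lambda>T. indicator {set_encode T}) ` Pow {..<n})"
  proof
    fix f assume f: "f \<in> regular_space"
    have "f = (\<Sum>T\<in>Pow {..<n}. f (set_encode T) *\<^sub>R indicator {set_encode T})"
    proof
      fix b
      have "(\<Sum>T\<in>Pow {..<n}. f (set_encode T) *\<^sub>R (indicator {set_encode T} :: nat \<Rightarrow> real)) b
          = (\<Sum>T\<in>Pow {..<n}. if set_decode b = T then f b else 0)"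
        unfolding sum_fun_apply
        by (rule sum.cong)
          (auto simp: scaleR_fun_apply indicator_def set_encode_inverse finite_subset[of _ "{..<n}"])
      also have "\<dots> = f b" using f by (auto simp: regular_space_def)
      finally show "f b = (\<Sum>T\<in>Pow {..<n}. f (set_encode T) *\<^sub>R indicator {set_encode T}) b" by simp
    qed
    also have "\<dots> \<in> span ((\<lambda>T. indicator {set_encode T}) ` Pow {..<n})"
      by (intro span_sum span_scale span_base) auto
    finally show "f \<in> span ((\<lambda>T. indicator {set_encode T}) ` Pow {..<n})" .
  qed
qed

lemma exists_finite_admissible_module:
  "\<exists>(V :: (nat \<Rightarrow> real) set) J g.
     admissible_module UNIV B V J g \<and> V \<noteq> {0} \<and> (\<exists>S. finite S \<and> span S = V)"
proof (intro exI conjI)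
  have "clifford_module UNIV B regular_space regular_rep"
    by (simp add: clifford_module_def subspace_regular_space regular_rep_in_regular_space
        linear_add[OF linear_regular_rep] linear_scale[OF linear_regular_rep]
        regular_rep_add_scale regular_rep_square)
  moreover have "bilinear_on regular_space regular_form"
    unfolding bilinear_on_def
  proof (intro ballI allI conjI)
    fix x y w :: "nat \<Rightarrow> real" and a b :: real
    show "regular_form (a *\<^sub>R x + b *\<^sub>R y) w = a * regular_form x w + b * regular_form y w"
      by (simp add: linear_add[OF linear_regular_form_left] linear_scale[OF linear_regular_form_left])
    then show "regular_form w (a *\<^sub>R x + b *\<^sub>R y) = a * regular_form w x + b * regular_form w y"
      by (simp add: regular_form_sym[of w])
  qed
  then have "scalar_product_on regular_space regular_form"
    using subspace_regular_space regular_form_nondegenerate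
    by (auto simp: scalar_product_on_def intro: regular_form_sym)
  ultimately show "admissible_module UNIV B regular_space regular_rep regular_form"
    by (simp add: admissible_module_def regular_form_regular_rep_skew)
  have "indicator {0} \<in> regular_space" "(indicator {0} :: nat \<Rightarrow> real) \<noteq> 0"
    by (auto simp: regular_space_def fun_eq_iff indicator_def)
  then show "regular_space \<noteq> {0}" by blast
  show "finite ((\<lambda>T. indicator {set_encode T}) ` Pow {..<n})" by simp
qed (rule span_indicators_regular_space)

end

section \<open>Clifford monomials in an admissible module\<close>

locale admissible_rep = orthonormal_basis_setup B n zb
  for B :: "'z::real_vector \<Rightarrow> 'z \<Rightarrow> real" and n zb +
  fixes W :: "'v::real_vector set" and J :: "'z \<Rightarrow> 'v \<Rightarrow> 'v" and g :: "'v \<Rightarrow> 'v \<Rightarrow> real"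
  assumes admissible: "admissible_module UNIV B W J g"
begin

lemma subspace_W: "subspace W"
  and J_in_W: "u \<in> W \<Longrightarrow> J z u \<in> W"
  and J_linear: "u \<in> W \<Longrightarrow> w \<in> W \<Longrightarrow> J z (a *\<^sub>R u + b *\<^sub>R w) = a *\<^sub>R J z u + b *\<^sub>R J z w"
  and J_linear_left: "u \<in> W \<Longrightarrow> J (a *\<^sub>R z + b *\<^sub>R z') u = a *\<^sub>R J z u + b *\<^sub>R J z' u"
  and J_square: "u \<in> W \<Longrightarrow> J z (J z u) = - (B z z *\<^sub>R u)"
  using admissible by (simp_all add: admissible_module_def clifford_module_def)

lemma J_skew: "u \<in> W \<Longrightarrow> w \<in> W \<Longrightarrow> g (J z u) w = - g u (J z w)"
  using admissible by (simp add: admissible_module_def)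

lemma g_sym: "u \<in> W \<Longrightarrow> w \<in> W \<Longrightarrow> g u w = g w u"
  and g_nondegenerate: "u \<in> W \<Longrightarrow> (\<forall>w\<in>W. g u w = 0) \<Longrightarrow> u = 0"
  and g_bilinear: "x \<in> W \<Longrightarrow> y \<in> W \<Longrightarrow> w \<in> W \<Longrightarrow>
     g (a *\<^sub>R x + b *\<^sub>R y) w = a * g x w + b * g y w \<and> g w (a *\<^sub>R x + b *\<^sub>R y) = a * g w x + b * g w y"
  using admissible by (simp_all add: admissible_module_def scalar_product_on_def bilinear_on_def)

lemma W_add: "x \<in> W \<Longrightarrow> y \<in> W \<Longrightarrow> x + y \<in> W"
  and W_scaleR: "x \<in> W \<Longrightarrow> c *\<^sub>R x \<in> W"
  and W_diff: "x \<in> W \<Longrightarrow> y \<in> W \<Longrightarrow> x - y \<in> W"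
  and W_zero: "0 \<in> W"
  using subspace_W by (simp_all add: subspace_add subspace_scale subspace_diff subspace_0)

lemma g_scaleR_left: "x \<in> W \<Longrightarrow> w \<in> W \<Longrightarrow> g (c *\<^sub>R x) w = c * g x w"
  and g_scaleR_right: "x \<in> W \<Longrightarrow> w \<in> W \<Longrightarrow> g w (c *\<^sub>R x) = c * g w x"
  using g_bilinear[of x x w c 0] by simp_all

lemma g_add_left: "x \<in> W \<Longrightarrow> y \<in> W \<Longrightarrow> w \<in> W \<Longrightarrow> g (x + y) w = g x w + g y w"
  and g_add_right: "x \<in> W \<Longrightarrow> y \<in> W \<Longrightarrow> w \<in> W \<Longrightarrow> g w (x + y) = g w x + g w y"
  using g_bilinear[of x y w 1 1] by simp_all

lemma g_diff_left: "x \<in> W \<Longrightarrow> y \<in> W \<Longrightarrow> w \<in> W \<Longrightarrow> g (x - y) w = g x w - g y w"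
  and g_diff_right: "x \<in> W \<Longrightarrow> y \<in> W \<Longrightarrow> w \<in> W \<Longrightarrow> g w (x - y) = g w x - g w y"
  using g_bilinear[of x y w 1 "-1"] by simp_all

lemma g_minus_right: "x \<in> W \<Longrightarrow> w \<in> W \<Longrightarrow> g w (- x) = - g w x"
  using g_scaleR_right[of x w "-1"] by simp

lemma g_zero_left: "w \<in> W \<Longrightarrow> g 0 w = 0"
  using g_scaleR_left[of 0 w 0] W_zero by simp

lemma J_scaleR: "u \<in> W \<Longrightarrow> J z (c *\<^sub>R u) = c *\<^sub>R J z u"
  using J_linear[of u u z c 0] by simp

lemma J_add: "u \<in> W \<Longrightarrow> w \<in> W \<Longrightarrow> J z (u + w) = J z u + J z w"
  using J_linear[of u w z 1 1] by simp

lemma J_isometry: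
  assumes "u \<in> W" "v \<in> W"
  shows "g (J z u) (J z v) = B z z * g u v"
  using J_skew[OF assms(1) J_in_W[OF assms(2)]] J_square[OF assms(2)]
    g_minus_right[OF W_scaleR[OF assms(2)] assms(1)] g_scaleR_right[OF assms(2,1)]
  by simp

abbreviation Jb :: "nat \<Rightarrow> 'v \<Rightarrow> 'v" where
  "Jb k \<equiv> J (zb k)"

lemma Jb_square: "u \<in> W \<Longrightarrow> Jb k (Jb k u) = - (sig k *\<^sub>R u)"
  by (simp add: sig_def J_square)

lemma Jb_anticommute:
  assumes "j < n" "k < n" "j \<noteq> k" "u \<in> W"
  shows "Jb j (Jb k u) = - Jb k (Jb j u)"
proof -
  have J_sum: "J (zb j + zb k) v = Jb j v + Jb k v" if "v \<in> W" for v
    using J_linear_left[OF that, of 1 "zb j" 1 "zb k"] by simp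
  have "Jb j (Jb j u) + Jb j (Jb k u) + (Jb k (Jb j u) + Jb k (Jb k u))
      = J (zb j + zb k) (J (zb j + zb k) u)"
    using assms(4) by (simp add: J_sum J_in_W W_add J_add)
  also have "\<dots> = - ((sig j + sig k) *\<^sub>R u)"
    using J_square[OF assms(4)] B_add_basis[OF assms(1-3)] by simp
  finally have "Jb j (Jb k u) + Jb k (Jb j u) = 0"
    using Jb_square[OF assms(4)] by (simp add: algebra_simps)
  then show ?thesis by (simp add: eq_neg_iff_add_eq_0)
qed

text \<open>\<open>mono I\<close> is the Clifford monomial \<open>J\<^sub>i\<^sub>1 \<circ> \<dots> \<circ> J\<^sub>i\<^sub>r\<close> for \<open>I \<inter> {..<n} = {i\<^sub>1 < \<dots> < i\<^sub>r}\<close>;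
  \<open>mono_prefix I m\<close> is the same product over \<open>I \<inter> {..<m}\<close>.\<close>

primrec mono_prefix :: "nat set \<Rightarrow> nat \<Rightarrow> 'v \<Rightarrow> 'v" where
  "mono_prefix I 0 = (\<lambda>u. u)"
| "mono_prefix I (Suc m) = (if m \<in> I then (\<lambda>u. mono_prefix I m (Jb m u)) else mono_prefix I m)"

definition mono :: "nat set \<Rightarrow> 'v \<Rightarrow> 'v" where
  "mono I = mono_prefix I n"

lemma mono_prefix_in_W: "u \<in> W \<Longrightarrow> mono_prefix I m u \<in> W"
  by (induction m arbitrary: u) (auto simp: J_in_W)

lemma mono_prefix_linear:
  "u \<in> W \<Longrightarrow> w \<in> W \<Longrightarrow>
     mono_prefix I m (a *\<^sub>R u + b *\<^sub>R w) = a *\<^sub>R mono_prefix I m u + b *\<^sub>R mono_prefix I m w"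
  by (induction m arbitrary: u w) (auto simp: J_linear J_in_W)

lemma mono_prefix_cong: "I \<inter> {..<m} = K \<inter> {..<m} \<Longrightarrow> mono_prefix I m = mono_prefix K m"
proof (induction m)
  case (Suc m)
  then have "I \<inter> {..<m} = K \<inter> {..<m}" and "m \<in> I \<longleftrightarrow> m \<in> K"
    by (auto simp: set_eq_iff less_Suc_eq)
  then show ?case using Suc.IH by simp
qed simp

lemma Jb_mono_prefix_swap:
  assumes "k < n" "m \<le> k"
  shows "\<exists>s. is_sign s \<and> (\<forall>u\<in>W. Jb k (mono_prefix I m u) = s *\<^sub>R mono_prefix I m (Jb k u))"
  using assms(2)
proof (induction m)
  case (Suc m)
  then obtain s where s: "is_sign s" "\<forall>u\<in>W. Jb k (mono_prefix I m u) = s *\<^sub>R mono_prefix I m (Jb k u)"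
    by auto
  show ?case
  proof (cases "m \<in> I")
    case True
    have "Jb k (mono_prefix I (Suc m) u) = (- s) *\<^sub>R mono_prefix I (Suc m) (Jb k u)" if "u \<in> W" for u
    proof -
      have "Jb k (Jb m u) = - Jb m (Jb k u)"
        using Jb_anticommute[of k m u] Suc.prems assms(1) that by simp
      then show ?thesis
        using True s(2) that mono_prefix_linear[of "Jb m (Jb k u)" _ I m "-1" 0]
        by (simp add: J_in_W)
    qed
    then show ?thesis using is_sign_uminus[OF s(1)] by blast
  qed (use s in auto)
qed (auto intro: exI[of _ 1])

lemma Jb_mono_prefix:
  assumes "k < m" "m \<le> n"
  shows "\<exists>s. is_sign s \<and> (\<forall>u\<in>W. Jb k (mono_prefix I m u) = s *\<^sub>R mono_prefix (sym_diff I {k}) m u)"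
  using assms
proof (induction m)
  case (Suc m)
  show ?case
  proof (cases "k = m")
    case True
    obtain s where s: "is_sign s" "\<forall>u\<in>W. Jb k (mono_prefix I k u) = s *\<^sub>R mono_prefix I k (Jb k u)"
      using Jb_mono_prefix_swap[of k k I] Suc.prems True by auto
    have prefix: "mono_prefix (sym_diff I {k}) k = mono_prefix I k"
      by (rule mono_prefix_cong) auto
    show ?thesis
    proof (cases "k \<in> I")
      case kI: True
      have "Jb k (mono_prefix I (Suc m) u) = (- s * sig k) *\<^sub>R mono_prefix (sym_diff I {k}) (Suc m) u"
        if "u \<in> W" for u
        using True kI s(2) that prefix Jb_square[OF that] mono_prefix_linear[of u u I k "- sig k" 0]
        by (simp add: J_in_W)
      moreover have "is_sign (- s * sig k)"
        using Suc.prems True by (intro is_sign_mult is_sign_uminus s(1) sig_sign) simp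
      ultimately show ?thesis by blast
    next
      case kI: False
      then show ?thesis using True s prefix by auto
    qed
  next
    case False
    then obtain s where s: "is_sign s"
      "\<forall>u\<in>W. Jb k (mono_prefix I m u) = s *\<^sub>R mono_prefix (sym_diff I {k}) m u"
      using Suc by auto
    have "m \<in> sym_diff I {k} \<longleftrightarrow> m \<in> I" using False by auto
    then have "Jb k (mono_prefix I (Suc m) u) = s *\<^sub>R mono_prefix (sym_diff I {k}) (Suc m) u"
      if "u \<in> W" for u
      using s(2) that by (cases "m \<in> I") (auto simp: J_in_W)
    then show ?thesis using s(1) by blast
  qed
qed simp

lemma mono_in_W: "u \<in> W \<Longrightarrow> mono I u \<in> W"
  by (simp add: mono_def mono_prefix_in_W)

lemma mono_linear: "u \<in> W \<Longrightarrow> w \<in> W \<Longrightarrow> mono I (a *\<^sub>R u + b *\<^sub>R w) = a *\<^sub>R mono I u + b *\<^sub>R mono I w"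
  by (simp add: mono_def mono_prefix_linear)

lemma mono_scaleR: "u \<in> W \<Longrightarrow> mono I (c *\<^sub>R u) = c *\<^sub>R mono I u"
  and mono_add: "u \<in> W \<Longrightarrow> w \<in> W \<Longrightarrow> mono I (u + w) = mono I u + mono I w"
  and mono_minus: "u \<in> W \<Longrightarrow> mono I (- u) = - mono I u"
  using mono_linear[of u u I c 0] mono_linear[of u w I 1 1] mono_linear[of u u I "-1" 0] by simp_all

lemma mono_zero: "mono I 0 = 0"
  using mono_scaleR[OF W_zero, of I 0] by simp

lemma mono_empty: "mono {} u = u"
proof -
  have "mono_prefix {} m = (\<lambda>u. u)" for m by (induction m) auto
  then show ?thesis by (simp add: mono_def)
qed

lemma Jb_mono: "k < n \<Longrightarrow> \<exists>s. is_sign s \<and> (\<forall>u\<in>W. Jb k (mono I u) = s *\<^sub>R mono (sym_diff I {k}) u)"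
  unfolding mono_def using Jb_mono_prefix[of k n I] by blast

lemma mono_prefix_mono:
  "m \<le> n \<Longrightarrow>
     \<exists>s. is_sign s \<and> (\<forall>u\<in>W. mono_prefix I m (mono K u) = s *\<^sub>R mono (sym_diff (I \<inter> {..<m}) K) u)"
proof (induction m arbitrary: K)
  case 0
  then show ?case by (intro exI[of _ 1]) simp
next
  case (Suc m)
  show ?case
  proof (cases "m \<in> I")
    case True
    obtain s where s: "is_sign s" "\<forall>u\<in>W. Jb m (mono K u) = s *\<^sub>R mono (sym_diff K {m}) u"
      using Jb_mono[of m K] Suc.prems by auto
    obtain s' where s': "is_sign s'"
      "\<forall>u\<in>W. mono_prefix I m (mono (sym_diff K {m}) u) = s' *\<^sub>R mono (sym_diff (I \<inter> {..<m}) (sym_diff K {m})) u"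
      using Suc by auto
    have "sym_diff (I \<inter> {..<m}) (sym_diff K {m}) = sym_diff (I \<inter> {..<Suc m}) K"
      using True by auto
    then have "\<forall>u\<in>W. mono_prefix I (Suc m) (mono K u) = (s * s') *\<^sub>R mono (sym_diff (I \<inter> {..<Suc m}) K) u"
      using True s(2) s'(2) mono_prefix_linear[of _ _ I m s 0] by (simp add: mono_in_W)
    then show ?thesis using is_sign_mult[OF s(1) s'(1)] by blast
  next
    case False
    then have "I \<inter> {..<Suc m} = I \<inter> {..<m}" by (auto simp: less_Suc_eq)
    then show ?thesis using Suc False by auto
  qed
qed

lemma mono_mono:
  "I \<subseteq> {..<n} \<Longrightarrow> \<exists>s. is_sign s \<and> (\<forall>u\<in>W. mono I (mono K u) = s *\<^sub>R mono (sym_diff I K) u)"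
  using mono_prefix_mono[of n I K] by (simp add: mono_def[of I] Int_absorb2)

lemma mono_square: "I \<subseteq> {..<n} \<Longrightarrow> \<exists>q. is_sign q \<and> (\<forall>u\<in>W. mono I (mono I u) = q *\<^sub>R u)"
  using mono_mono[of I I] by (simp add: mono_empty)

lemma mono_commute_sign:
  assumes "I \<subseteq> {..<n}" "K \<subseteq> {..<n}"
  shows "\<exists>s. is_sign s \<and> (\<forall>u\<in>W. mono I (mono K u) = s *\<^sub>R mono K (mono I u))"
proof -
  obtain s where s: "is_sign s" "\<forall>u\<in>W. mono I (mono K u) = s *\<^sub>R mono (sym_diff I K) u"
    using mono_mono[OF assms(1)] by auto
  obtain s' where s': "is_sign s'" "\<forall>u\<in>W. mono K (mono I u) = s' *\<^sub>R mono (sym_diff I K) u"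
    using mono_mono[OF assms(2), of I] by (auto simp: Un_commute)
  have "\<forall>u\<in>W. mono I (mono K u) = (s * s') *\<^sub>R mono K (mono I u)"
    using s(2) s'(2) is_sign_square[OF s'(1)] by (simp add: mult.assoc)
  then show ?thesis using is_sign_mult[OF s(1) s'(1)] by blast
qed

lemma mono_prefix_adjoint:
  "m \<le> n \<Longrightarrow>
     \<exists>s. is_sign s \<and> (\<forall>u\<in>W. \<forall>v\<in>W. g (mono_prefix I m u) v = s * g u (mono_prefix I m v))"
proof (induction m)
  case 0
  then show ?case by (intro exI[of _ 1]) simp
next
  case (Suc m)
  then obtain s where s: "is_sign s" "\<forall>u\<in>W. \<forall>v\<in>W. g (mono_prefix I m u) v = s * g u (mono_prefix I m v)"
    by auto
  obtain s' where s': "is_sign s'" "\<forall>u\<in>W. Jb m (mono_prefix I m u) = s' *\<^sub>R mono_prefix I m (Jb m u)"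
    using Jb_mono_prefix_swap[of m m I] Suc.prems by auto
  show ?case
  proof (cases "m \<in> I")
    case True
    have "g (mono_prefix I (Suc m) u) v = (- s * s') * g u (mono_prefix I (Suc m) v)" if "u \<in> W" "v \<in> W" for u v
    proof -
      have "g (mono_prefix I (Suc m) u) v = s * g (Jb m u) (mono_prefix I m v)"
        using True s(2) that by (simp add: J_in_W)
      also have "\<dots> = - s * g u (Jb m (mono_prefix I m v))"
        using J_skew that by (simp add: mono_prefix_in_W)
      also have "\<dots> = (- s * s') * g u (mono_prefix I (Suc m) v)"
        using True s'(2) that by (simp add: g_scaleR_right mono_prefix_in_W J_in_W)
      finally show ?thesis .
    qed
    then show ?thesis using is_sign_mult[OF is_sign_uminus[OF s(1)] s'(1)] by blast
  qed (use s in auto)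
qed

lemma mono_adjoint: "\<exists>s. is_sign s \<and> (\<forall>u\<in>W. \<forall>v\<in>W. g (mono I u) v = s * g u (mono I v))"
  using mono_prefix_adjoint[of n I] by (simp add: mono_def)

end

section \<open>Good vectors\<close>

context admissible_rep
begin

definition self_adjoint :: "('v \<Rightarrow> 'v) \<Rightarrow> bool" where
  "self_adjoint T \<longleftrightarrow> (\<forall>u\<in>W. \<forall>v\<in>W. g (T u) v = g u (T v))"

definition nondegenerate :: "'v set \<Rightarrow> bool" where
  "nondegenerate X \<longleftrightarrow> (\<forall>x\<in>X. (\<forall>y\<in>X. g x y = 0) \<longrightarrow> x = 0)"

definition compatible :: "'v set \<Rightarrow> bool" where
  "compatible X \<longleftrightarrow> subspace X \<and> X \<subseteq> W \<and> X \<noteq> {0} \<and> nondegenerate X \<and>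
     (\<forall>I\<subseteq>{..<n}. (\<forall>x\<in>X. mono I x \<in> X) \<or> (\<forall>x\<in>X. g x (mono I x) = 0))"

lemma compatible_W: "W \<noteq> {0} \<Longrightarrow> compatible W"
  using subspace_W g_nondegenerate by (auto simp: compatible_def nondegenerate_def mono_in_W)

lemma nondegenerate_ex_anisotropic:
  assumes "subspace X" "X \<subseteq> W" "X \<noteq> {0}" "nondegenerate X"
  shows "\<exists>w\<in>X. g w w \<noteq> 0"
proof (rule ccontr)
  assume "\<not> ?thesis"
  then have iso: "g v v = 0" if "v \<in> X" for v using that by blast
  obtain x where x: "x \<in> X" "x \<noteq> 0" using assms(1,3) subspace_0 by blast
  then obtain y where y: "y \<in> X" "g x y \<noteq> 0" using assms(4) unfolding nondegenerate_def by blast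
  have "x \<in> W" "y \<in> W" using x y assms(2) by auto
  then have "g (x + y) (x + y) = 2 * g x y"
    using iso x y g_sym by (simp add: g_add_left g_add_right W_add)
  then show False using iso y subspace_add[OF assms(1) x(1) y(1)] by auto
qed

lemma compatible_fixed_space:
  assumes X: "compatible X" and I: "I \<subseteq> {..<n}" and pres: "\<forall>x\<in>X. mono I x \<in> X"
    and sa: "self_adjoint (mono I)" and inv: "\<forall>u\<in>W. mono I (mono I u) = u"
    and not_minus: "\<exists>x\<in>X. mono I x \<noteq> - x"
  shows "compatible {x\<in>X. mono I x = x}" (is "compatible ?E")
proof -
  have subX: "subspace X" and XW: "X \<subseteq> W" and ndX: "nondegenerate X"
    and XP: "\<And>K. K \<subseteq> {..<n} \<Longrightarrow> (\<forall>x\<in>X. mono K x \<in> X) \<or> (\<forall>x\<in>X. g x (mono K x) = 0)"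
    using X by (auto simp: compatible_def)
  have sym_in_E: "y + mono I y \<in> ?E" if "y \<in> X" for y
    using that pres inv XW subspace_add[OF subX] by (auto simp: mono_add mono_in_W add.commute)
  have "subspace ?E"
    using subX XW mono_zero by (auto simp: subspace_def mono_add mono_scaleR subset_iff)
  moreover have "?E \<noteq> {0}"
  proof -
    obtain x where "x \<in> X" "mono I x \<noteq> - x" using not_minus by blast
    moreover have "x + mono I x \<noteq> 0" using \<open>mono I x \<noteq> - x\<close> by (metis add.commute add_eq_0_iff)
    ultimately show ?thesis using sym_in_E[of x] by blast
  qed
  moreover have "nondegenerate ?E"
    unfolding nondegenerate_def
  proof (intro ballI impI)
    fix x assume x: "x \<in> ?E" and orth: "\<forall>y\<in>?E. g x y = 0"
    have "g x y = 0" if y: "y \<in> X" for y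
    proof -
      have "g x (mono I y) = g x y" using sa x y XW by (metis (mono_tags, lifting) mem_Collect_eq self_adjoint_def subsetD)
      moreover have "g x (y + mono I y) = 0" using orth sym_in_E[OF y] by blast
      ultimately show ?thesis using x y XW by (simp add: g_add_right mono_in_W subset_iff)
    qed
    then show "x = 0" using ndX x unfolding nondegenerate_def by blast
  qed
  moreover have "(\<forall>x\<in>?E. mono K x \<in> ?E) \<or> (\<forall>x\<in>?E. g x (mono K x) = 0)" if K: "K \<subseteq> {..<n}" for K
  proof (cases "\<forall>x\<in>X. mono K x \<in> X")
    case True
    obtain c where c: "is_sign c" "\<forall>u\<in>W. mono I (mono K u) = c *\<^sub>R mono K (mono I u)"
      using mono_commute_sign[OF I K] by auto
    show ?thesis
    proof (cases "c = 1")
      case True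
      then show ?thesis using c(2) \<open>\<forall>x\<in>X. mono K x \<in> X\<close> XW by auto
    next
      case False
      then have c_minus: "c = -1" using c(1) by (simp add: is_sign_def)
      have "g x (mono K x) = 0" if x: "x \<in> ?E" for x
      proof -
        have xW: "x \<in> W" and Ix: "mono I x = x" using x XW by auto
        have "g x (mono K x) = g x (mono I (mono K x))"
          using sa xW Ix by (metis self_adjoint_def mono_in_W)
        also have "\<dots> = - g x (mono K x)" using c(2) c_minus xW Ix by (simp add: g_minus_right mono_in_W)
        finally show ?thesis by simp
      qed
      then show ?thesis by blast
    qed
  next
    case False
    then show ?thesis using XP[OF K] by blast
  qed
  ultimately show ?thesis using XW by (auto simp: compatible_def)
qed

text \<open>Since \<open>T = mono I\<close> is self-adjoint with \<open>T\<^sup>2 = -1\<close>, \<open>g (T w) (T w) = - g w w\<close>, and a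
  rotation of \<open>w\<close> in the plane spanned by \<open>w\<close> and \<open>T w\<close> makes \<open>g w (T w)\<close> vanish.\<close>

lemma rotate_to_isotropic:
  assumes sa: "self_adjoint (mono I)" and sq: "\<forall>u\<in>W. mono I (mono I u) = - u"
    and w: "w \<in> W" and b: "b = g w (mono I w)" "b \<noteq> 0"
  obtains c where "g (c *\<^sub>R w + b *\<^sub>R mono I w) (c *\<^sub>R w + b *\<^sub>R mono I w) \<noteq> 0"
    "g (c *\<^sub>R w + b *\<^sub>R mono I w) (mono I (c *\<^sub>R w + b *\<^sub>R mono I w)) = 0"
proof -
  define a where "a = g w w"
  define r where "r = sqrt (a\<^sup>2 + b\<^sup>2)"
  define c where "c = a + r"
  have Tw: "mono I w \<in> W" using w by (rule mono_in_W)
  have r2: "r * r = a * a + b * b" unfolding r_def by (simp add: power2_eq_square[symmetric])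
  have "sqrt (a\<^sup>2) < sqrt (a\<^sup>2 + b\<^sup>2)" by (rule real_sqrt_less_mono) (use b(2) in simp)
  then have "c > 0" unfolding c_def r_def by simp
  have gTT: "g (mono I w) (mono I w) = - a" using sa sq w Tw by (simp add: self_adjoint_def a_def g_minus_right)
  have gTw: "g (mono I w) w = b" using g_sym[OF Tw w] b(1) by simp
  have Tw': "mono I (c *\<^sub>R w + b *\<^sub>R mono I w) = c *\<^sub>R mono I w - b *\<^sub>R w"
    using w Tw sq by (simp add: mono_add mono_scaleR W_scaleR)
  have "g (c *\<^sub>R w + b *\<^sub>R mono I w) (c *\<^sub>R w + b *\<^sub>R mono I w) = c*c*a + 2*c*b*b - b*b*a"
    using w Tw gTT gTw a_def b(1)
    by (simp add: g_add_left g_add_right g_scaleR_left g_scaleR_right W_scaleR W_add algebra_simps)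
  also have "\<dots> = 2 * c * (a*a + b*b)"
    unfolding c_def using r2 by (simp add: algebra_simps)
  finally have anisotropic: "g (c *\<^sub>R w + b *\<^sub>R mono I w) (c *\<^sub>R w + b *\<^sub>R mono I w) \<noteq> 0"
    using \<open>c > 0\<close> b(2) by (simp add: add_nonneg_eq_0_iff)
  have "g (c *\<^sub>R w + b *\<^sub>R mono I w) (mono I (c *\<^sub>R w + b *\<^sub>R mono I w)) = c*c*b - 2*c*a*b - b*b*b"
    unfolding Tw' using w Tw gTT gTw a_def b(1)
    by (simp add: g_add_left g_add_right g_scaleR_left g_scaleR_right g_diff_left g_diff_right
        W_scaleR W_add W_diff algebra_simps)
  also have "\<dots> = 0"
    unfolding c_def using r2 by (simp add: algebra_simps power2_eq_square)
  finally show ?thesis using that anisotropic by blast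
qed

lemma anticommuting_isotropic:
  assumes sa: "self_adjoint (mono I0)" and sq: "\<forall>u\<in>W. mono I0 (mono I0 u) = - u"
    and anti: "\<forall>u\<in>W. mono I (mono I0 u) = - mono I0 (mono I u)"
    and w: "w \<in> W" "g w (mono I w) = 0"
  shows "g (c *\<^sub>R w + d *\<^sub>R mono I0 w) (mono I (c *\<^sub>R w + d *\<^sub>R mono I0 w)) = 0"
proof -
  have W': "mono I0 w \<in> W" "mono I w \<in> W" "mono I (mono I0 w) \<in> W" "mono I0 (mono I w) \<in> W"
    using w by (simp_all add: mono_in_W)
  have anti': "mono I0 (mono I u) = - mono I (mono I0 u)" if "u \<in> W" for u
    using anti that by simp
  have square_term: "g (mono I0 w) (mono I (mono I0 w)) = 0"
  proof -
    have "g (mono I0 w) (mono I (mono I0 w)) = g w (mono I0 (mono I (mono I0 w)))"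
      using sa w W' by (simp add: self_adjoint_def)
    also have "mono I0 (mono I (mono I0 w)) = mono I w"
      using anti'[OF W'(1)] sq w by (simp add: mono_minus)
    finally show ?thesis using w by simp
  qed
  have mixed_terms: "g w (mono I (mono I0 w)) + g (mono I0 w) (mono I w) = 0"
    using sa w W' anti'[OF w(1)] by (simp add: self_adjoint_def g_minus_right)
  have "g (c *\<^sub>R w + d *\<^sub>R mono I0 w) (mono I (c *\<^sub>R w + d *\<^sub>R mono I0 w))
      = c*c * g w (mono I w) + c*d * (g w (mono I (mono I0 w)) + g (mono I0 w) (mono I w))
        + d*d * g (mono I0 w) (mono I (mono I0 w))"
    using w W' by (simp add: mono_add mono_scaleR g_add_left g_add_right g_scaleR_left g_scaleR_right
        W_scaleR W_add algebra_simps)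
  then show ?thesis using w square_term mixed_terms by simp
qed

end

context admissible_rep
begin

definition good :: "'v \<Rightarrow> bool" where
  "good w \<longleftrightarrow> (\<forall>I\<subseteq>{..<n}. mono I w = w \<or> mono I w = - w \<or> g w (mono I w) = 0)"

end

locale minimal_compatible = admissible_rep B n zb W J g
  for B :: "'z::real_vector \<Rightarrow> 'z \<Rightarrow> real" and n zb
    and W :: "'v::real_vector set" and J :: "'z \<Rightarrow> 'v \<Rightarrow> 'v" and g +
  fixes S X :: "'v set"
  assumes finite_S: "finite S" and W_span: "W \<subseteq> span S"
    and compatible_X: "compatible X" and minimal_X: "\<And>Y. compatible Y \<Longrightarrow> dim X \<le> dim Y"
begin

lemma subspace_X: "subspace X"
  and X_W: "X \<subseteq> W"
  and nondegenerate_X: "nondegenerate X"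
  and X_invariant_or_isotropic: "I \<subseteq> {..<n} \<Longrightarrow> (\<forall>x\<in>X. mono I x \<in> X) \<or> (\<forall>x\<in>X. g x (mono I x) = 0)"
  using compatible_X by (auto simp: compatible_def)

lemma involution_acts_by_sign:
  assumes "I \<subseteq> {..<n}" "\<forall>x\<in>X. mono I x \<in> X" "self_adjoint (mono I)"
    "\<forall>u\<in>W. mono I (mono I u) = u"
  shows "(\<forall>x\<in>X. mono I x = x) \<or> (\<forall>x\<in>X. mono I x = - x)"
proof (rule ccontr)
  assume neither: "\<not> ?thesis"
  then have E: "compatible {x\<in>X. mono I x = x}"
    using compatible_fixed_space[OF compatible_X assms] by blast
  have "{x\<in>X. mono I x = x} \<subset> X" using neither by auto
  moreover have "X \<subseteq> span S" using X_W W_span by blast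
  ultimately have "dim {x\<in>X. mono I x = x} < dim X"
    using E finite_S by (intro dim_strict_mono_finite_span) (simp_all add: compatible_def)
  then show False using minimal_X[OF E] by simp
qed

definition anti_involutions :: "nat set set" where
  "anti_involutions = {I. I \<subseteq> {..<n} \<and> (\<forall>x\<in>X. mono I x \<in> X) \<and> self_adjoint (mono I) \<and>
     (\<forall>u\<in>W. mono I (mono I u) = - u)}"

lemma finite_anti_involutions: "finite anti_involutions"
  by (rule finite_subset[of _ "Pow {..<n}"]) (auto simp: anti_involutions_def)

lemma commuting_anti_involutions_proportional:
  assumes I: "I \<in> anti_involutions" and I0: "I0 \<in> anti_involutions"
    and comm: "\<forall>u\<in>W. mono I (mono I0 u) = mono I0 (mono I u)"
  shows "\<exists>\<epsilon>. is_sign \<epsilon> \<and> (\<forall>x\<in>X. mono I x = \<epsilon> *\<^sub>R mono I0 x)"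
proof -
  have In: "I \<subseteq> {..<n}" and sa: "self_adjoint (mono I)" and sq: "\<forall>u\<in>W. mono I (mono I u) = - u"
    and presI: "\<forall>x\<in>X. mono I x \<in> X"
    using I by (auto simp: anti_involutions_def)
  have I0n: "I0 \<subseteq> {..<n}" and sa0: "self_adjoint (mono I0)" and sq0: "\<forall>u\<in>W. mono I0 (mono I0 u) = - u"
    and pres0: "\<forall>x\<in>X. mono I0 x \<in> X"
    using I0 by (auto simp: anti_involutions_def)
  obtain s where s: "is_sign s" "\<forall>u\<in>W. mono I (mono I0 u) = s *\<^sub>R mono (sym_diff I I0) u"
    using mono_mono[OF In] by auto
  define K where "K = sym_diff I I0"
  have K_prod: "mono K u = s *\<^sub>R mono I (mono I0 u)" if "u \<in> W" for u
    using s that is_sign_square[OF s(1)] by (simp add: K_def)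
  have "K \<subseteq> {..<n}" using In I0n by (auto simp: K_def)
  moreover have "\<forall>x\<in>X. mono K x \<in> X"
    using K_prod presI pres0 X_W subspace_X by (auto simp: subspace_scale subset_iff)
  moreover have "self_adjoint (mono K)"
    unfolding self_adjoint_def
  proof (intro ballI)
    fix u v assume uv: "u \<in> W" "v \<in> W"
    have "g (mono K u) v = s * g (mono I (mono I0 u)) v" using K_prod uv by (simp add: g_scaleR_left mono_in_W)
    also have "\<dots> = s * g u (mono I0 (mono I v))" using sa sa0 uv by (simp add: self_adjoint_def mono_in_W)
    also have "\<dots> = g u (mono K v)" using K_prod comm uv by (simp add: g_scaleR_right mono_in_W)
    finally show "g (mono K u) v = g u (mono K v)" .
  qed
  moreover have "\<forall>u\<in>W. mono K (mono K u) = u"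
  proof
    fix u assume u: "u \<in> W"
    have "mono K (mono K u) = (s * s) *\<^sub>R mono I (mono I0 (mono I (mono I0 u)))"
      using K_prod u by (simp add: mono_in_W mono_scaleR)
    also have "mono I0 (mono I (mono I0 u)) = mono I (mono I0 (mono I0 u))"
      using comm u by (simp add: mono_in_W)
    finally show "mono K (mono K u) = u"
      using is_sign_square[OF s(1)] sq sq0 u by (simp add: mono_minus mono_in_W)
  qed
  ultimately obtain \<epsilon> where \<epsilon>: "is_sign \<epsilon>" "\<forall>x\<in>X. mono K x = \<epsilon> *\<^sub>R x"
    using involution_acts_by_sign by (metis is_sign_1 is_sign_minus_1 scaleR_minus1_left scaleR_one)
  have "mono I x = (- s * \<epsilon>) *\<^sub>R mono I0 x" if x: "x \<in> X" for x
  proof -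
    have xW: "x \<in> W" and Ix: "mono I0 x \<in> X" using x X_W pres0 by auto
    have "\<epsilon> *\<^sub>R mono I0 x = s *\<^sub>R mono I (mono I0 (mono I0 x))"
      using \<epsilon>(2) K_prod Ix X_W by (metis subsetD)
    also have "\<dots> = - (s *\<^sub>R mono I x)" using sq0 xW by (simp add: mono_minus)
    finally have "(s * \<epsilon>) *\<^sub>R mono I0 x = - ((s * s) *\<^sub>R mono I x)"
      by (metis scaleR_scaleR scaleR_minus_right)
    then show ?thesis using is_sign_square[OF s(1)] by simp
  qed
  then show ?thesis using is_sign_mult[OF is_sign_uminus[OF s(1)] \<epsilon>(1)] by blast
qed

lemma isotropic_insert:
  assumes I0: "I0 \<in> anti_involutions" and F: "F \<subseteq> anti_involutions"
    and w: "w \<in> X" "g w w \<noteq> 0" "\<forall>I\<in>F. g w (mono I w) = 0"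
  shows "\<exists>w'\<in>X. g w' w' \<noteq> 0 \<and> (\<forall>I\<in>insert I0 F. g w' (mono I w') = 0)"
proof (cases "g w (mono I0 w) = 0")
  case False
  have I0n: "I0 \<subseteq> {..<n}" and sa0: "self_adjoint (mono I0)" and sq0: "\<forall>u\<in>W. mono I0 (mono I0 u) = - u"
    and pres0: "\<forall>x\<in>X. mono I0 x \<in> X"
    using I0 by (auto simp: anti_involutions_def)
  have wW: "w \<in> W" using w X_W by blast
  define b where "b = g w (mono I0 w)"
  obtain c where c: "g (c *\<^sub>R w + b *\<^sub>R mono I0 w) (c *\<^sub>R w + b *\<^sub>R mono I0 w) \<noteq> 0"
    "g (c *\<^sub>R w + b *\<^sub>R mono I0 w) (mono I0 (c *\<^sub>R w + b *\<^sub>R mono I0 w)) = 0"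
    using rotate_to_isotropic[OF sa0 sq0 wW b_def] False b_def by blast
  have "c *\<^sub>R w + b *\<^sub>R mono I0 w \<in> X"
    using w pres0 subspace_X by (simp add: subspace_add subspace_scale)
  moreover have "g (c *\<^sub>R w + b *\<^sub>R mono I0 w) (mono I (c *\<^sub>R w + b *\<^sub>R mono I0 w)) = 0"
    if IF: "I \<in> F" for I
  proof -
    have I: "I \<in> anti_involutions" and Iw: "g w (mono I w) = 0" using IF F w by auto
    obtain e where e: "is_sign e" "\<forall>u\<in>W. mono I (mono I0 u) = e *\<^sub>R mono I0 (mono I u)"
      using mono_commute_sign[OF _ I0n, of I] I by (auto simp: anti_involutions_def)
    have "e \<noteq> 1"
    proof
      assume "e = 1"
      then obtain \<epsilon> where "is_sign \<epsilon>" "\<forall>x\<in>X. mono I x = \<epsilon> *\<^sub>R mono I0 x"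
        using commuting_anti_involutions_proportional[OF I I0] e(2) by auto
      then have "g w (mono I w) = \<epsilon> * b"
        using w(1) wW X_W pres0 by (simp add: b_def g_scaleR_right subset_iff)
      then show False using Iw False \<open>is_sign \<epsilon>\<close> is_sign_nonzero by (simp add: b_def)
    qed
    then have "\<forall>u\<in>W. mono I (mono I0 u) = - mono I0 (mono I u)"
      using e by (simp add: is_sign_def)
    then show ?thesis using anticommuting_isotropic[OF sa0 sq0 _ wW Iw] by blast
  qed
  ultimately show ?thesis using c by blast
qed (use w in auto)

lemma exists_isotropic_for_anti_involutions:
  "\<exists>w\<in>X. g w w \<noteq> 0 \<and> (\<forall>I\<in>anti_involutions. g w (mono I w) = 0)"
proof -
  have "F \<subseteq> anti_involutions \<Longrightarrow> \<exists>w\<in>X. g w w \<noteq> 0 \<and> (\<forall>I\<in>F. g w (mono I w) = 0)" for F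
  proof (induction F rule: infinite_finite_induct)
    case (infinite F)
    then show ?case using finite_anti_involutions finite_subset by blast
  next
    case empty
    then show ?case
      using nondegenerate_ex_anisotropic subspace_X X_W nondegenerate_X compatible_X
      by (auto simp: compatible_def)
  next
    case (insert I0 F)
    then show ?case using isotropic_insert by (metis insert_subset)
  qed
  then show ?thesis by blast
qed

lemma exists_good_vector: "\<exists>w\<in>W. g w w \<noteq> 0 \<and> good w"
proof -
  obtain w where w: "w \<in> X" "g w w \<noteq> 0" "\<forall>I\<in>anti_involutions. g w (mono I w) = 0"
    using exists_isotropic_for_anti_involutions by blast
  have wW: "w \<in> W" using w X_W by blast
  have "mono I w = w \<or> mono I w = - w \<or> g w (mono I w) = 0" if I: "I \<subseteq> {..<n}" for I
  proof (cases "\<forall>x\<in>X. mono I x \<in> X")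
    case False
    then show ?thesis using X_invariant_or_isotropic[OF I] w by blast
  next
    case pres: True
    obtain s where s: "is_sign s" "\<forall>u\<in>W. \<forall>v\<in>W. g (mono I u) v = s * g u (mono I v)"
      using mono_adjoint by blast
    obtain q where q: "is_sign q" "\<forall>u\<in>W. mono I (mono I u) = q *\<^sub>R u"
      using mono_square[OF I] by blast
    consider "s = -1" | "s = 1" "q = 1" | "s = 1" "q = -1"
      using s(1) q(1) by (auto simp: is_sign_def)
    then show ?thesis
    proof cases
      case 1
      have "g w (mono I w) = g (mono I w) w" using g_sym wW mono_in_W by blast
      also have "\<dots> = - g w (mono I w)" using s(2) 1 wW by simp
      finally show ?thesis by simp
    next
      case 2
      then have "(\<forall>x\<in>X. mono I x = x) \<or> (\<forall>x\<in>X. mono I x = - x)"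
        using involution_acts_by_sign[OF I pres] s q by (simp add: self_adjoint_def)
      then show ?thesis using w by blast
    next
      case 3
      then have "I \<in> anti_involutions"
        using I pres s q by (simp add: anti_involutions_def self_adjoint_def)
      then show ?thesis using w by blast
    qed
  qed
  then show ?thesis using wW w by (auto simp: good_def)
qed

end

context admissible_rep
begin

lemma good_vector_exists:
  assumes "finite S" "W \<subseteq> span S" "W \<noteq> {0}"
  shows "\<exists>w\<in>W. g w w \<noteq> 0 \<and> good w"
proof -
  obtain X where "compatible X" "\<And>Y. compatible Y \<Longrightarrow> dim X \<le> dim Y"
    using ex_has_least_nat[of compatible W dim] compatible_W[OF assms(3)] by blast
  then interpret minimal_compatible B n zb W J g S X
    using assms by unfold_locales auto
  show ?thesis by (rule exists_good_vector)
qed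

end

section \<open>An orthonormal basis with entries \<open>0\<close>, \<open>\<plusminus>1\<close>\<close>

context admissible_rep
begin

lemma good_scaleR:
  assumes "w \<in> W" "good w"
  shows "good (c *\<^sub>R w)"
  unfolding good_def
proof (intro allI impI)
  fix I assume "I \<subseteq> {..<n}"
  then have "mono I w = w \<or> mono I w = - w \<or> g w (mono I w) = 0" using assms(2) by (simp add: good_def)
  then show "mono I (c *\<^sub>R w) = c *\<^sub>R w \<or> mono I (c *\<^sub>R w) = - (c *\<^sub>R w) \<or>
      g (c *\<^sub>R w) (mono I (c *\<^sub>R w)) = 0"
    using assms(1) by (auto simp: mono_scaleR g_scaleR_left g_scaleR_right W_scaleR mono_in_W)
qed

lemma good_orbit_dichotomy:
  assumes w: "w \<in> W" "good w" and I: "I \<subseteq> {..<n}" and K: "K \<subseteq> {..<n}"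
  shows "mono K w = mono I w \<or> mono K w = - mono I w \<or> g (mono I w) (mono K w) = 0"
proof -
  obtain s where s: "is_sign s" "\<forall>u\<in>W. \<forall>v\<in>W. g (mono I u) v = s * g u (mono I v)"
    using mono_adjoint by blast
  obtain s' where s': "is_sign s'" "\<forall>u\<in>W. mono I (mono K u) = s' *\<^sub>R mono (sym_diff I K) u"
    using mono_mono[OF I] by blast
  obtain q where q: "is_sign q" "\<forall>u\<in>W. mono I (mono I u) = q *\<^sub>R u"
    using mono_square[OF I] by blast
  have "sym_diff I K \<subseteq> {..<n}" using I K by auto
  then consider "mono (sym_diff I K) w = w" | "mono (sym_diff I K) w = - w"
    | "g w (mono (sym_diff I K) w) = 0"
    using w(2) unfolding good_def by blast
  then show ?thesis
  proof cases
    case 3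
    then have "g (mono I w) (mono K w) = 0"
      using s(2) s'(2) w(1) by (simp add: mono_in_W g_scaleR_right)
    then show ?thesis by blast
  next
    case sign: 1
    have "q *\<^sub>R mono K w = mono I (mono I (mono K w))" using q(2) w(1) mono_in_W by simp
    also have "\<dots> = s' *\<^sub>R mono I w" using s'(2) sign w(1) by (simp add: mono_scaleR mono_in_W)
    finally have "mono K w = (q * s') *\<^sub>R mono I w"
      using is_sign_square[OF q(1)] by (metis scaleR_scaleR scaleR_one)
    then show ?thesis using is_sign_mult[OF q(1) s'(1)] by (auto simp: is_sign_def)
  next
    case sign: 2
    have "q *\<^sub>R mono K w = mono I (mono I (mono K w))" using q(2) w(1) mono_in_W by simp
    also have "\<dots> = (- s') *\<^sub>R mono I w" using s'(2) sign w(1) by (simp add: mono_scaleR mono_minus mono_in_W W_scaleR)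
    finally have "mono K w = (q * - s') *\<^sub>R mono I w"
      using is_sign_square[OF q(1)] by (metis scaleR_scaleR scaleR_one)
    then show ?thesis using is_sign_mult[OF q(1) is_sign_uminus[OF s'(1)]] by (auto simp: is_sign_def)
  qed
qed

lemma mono_norm_sign:
  assumes "w \<in> W" "I \<subseteq> {..<n}"
  shows "\<exists>s. is_sign s \<and> g (mono I w) (mono I w) = s * g w w"
proof -
  obtain s where s: "is_sign s" "\<forall>u\<in>W. \<forall>v\<in>W. g (mono I u) v = s * g u (mono I v)"
    using mono_adjoint by blast
  obtain q where q: "is_sign q" "\<forall>u\<in>W. mono I (mono I u) = q *\<^sub>R u"
    using mono_square[OF assms(2)] by blast
  have "g (mono I w) (mono I w) = (s * q) * g w w"
    using s(2) q(2) assms(1) by (simp add: mono_in_W g_scaleR_right)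
  then show ?thesis using is_sign_mult[OF s(1) q(1)] by blast
qed

lemma g_sum_left:
  assumes "finite A" "\<And>a. a \<in> A \<Longrightarrow> f a \<in> W" "y \<in> W"
  shows "g (sum f A) y = (\<Sum>a\<in>A. g (f a) y)"
  using assms
proof (induction A rule: finite_induct)
  case (insert a A)
  then show ?case by (simp add: g_add_left subspace_sum[OF subspace_W])
qed (simp add: g_zero_left)

definition orthonormal_family :: "'v set \<Rightarrow> bool" where
  "orthonormal_family R \<longleftrightarrow> R \<subseteq> W \<and> finite R \<and>
     (\<forall>x\<in>R. \<forall>y\<in>R. x \<noteq> y \<longrightarrow> g x y = 0) \<and> (\<forall>x\<in>R. is_sign (g x x))"

lemma orthonormal_family_coeff:
  assumes R: "orthonormal_family R" and y: "y \<in> R"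
  shows "g (\<Sum>v\<in>R. u v *\<^sub>R v) y = u y * g y y"
proof -
  have RW: "R \<subseteq> W" and fin: "finite R" and orth: "\<And>x. x \<in> R \<Longrightarrow> x \<noteq> y \<Longrightarrow> g x y = 0"
    using R y by (auto simp: orthonormal_family_def)
  have "g (\<Sum>v\<in>R. u v *\<^sub>R v) y = (\<Sum>x\<in>R. g (u x *\<^sub>R x) y)"
    using fin RW y by (intro g_sum_left) (auto simp: W_scaleR)
  also have "\<dots> = (\<Sum>x\<in>R. u x * g x y)"
    using RW y by (intro sum.cong) (auto simp: g_scaleR_left subset_iff)
  also have "\<dots> = u y * g y y"
    using fin y orth by (subst sum.remove[of R y]) (auto intro!: sum.neutral)
  finally show ?thesis .
qed

lemma orthonormal_family_independent:
  assumes R: "orthonormal_family R"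
  shows "independent R"
proof -
  have fin: "finite R" and sign: "\<And>x. x \<in> R \<Longrightarrow> is_sign (g x x)" and RW: "R \<subseteq> W"
    using R by (auto simp: orthonormal_family_def)
  have "u y = 0" if "(\<Sum>v\<in>R. u v *\<^sub>R v) = 0" "y \<in> R" for u y
    using orthonormal_family_coeff[OF R \<open>y \<in> R\<close>, of u] that RW g_zero_left is_sign_nonzero[OF sign]
    by (auto simp: subset_iff)
  then show ?thesis using dependent_finite[OF fin] by blast
qed

lemma nondegenerate_span_orthonormal_family:
  assumes R: "orthonormal_family R"
  shows "nondegenerate (span R)"
  unfolding nondegenerate_def
proof (intro ballI impI)
  fix x assume "x \<in> span R" and orth: "\<forall>y\<in>span R. g x y = 0"
  have fin: "finite R" and sign: "\<And>x. x \<in> R \<Longrightarrow> is_sign (g x x)"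
    using R by (auto simp: orthonormal_family_def)
  obtain u where x: "x = (\<Sum>v\<in>R. u v *\<^sub>R v)"
    using \<open>x \<in> span R\<close> span_finite[OF fin] by auto
  have "u y = 0" if "y \<in> R" for y
    using orthonormal_family_coeff[OF R that, of u] orth span_base[OF that] x is_sign_nonzero[OF sign[OF that]]
    by simp
  then show "x = 0" using x by simp
qed

lemma orthonormal_family_basis:
  assumes R: "orthonormal_family R" and vb: "bij_betw vb {..<m} R"
  shows "orthonormal_basis_on (span R) g m vb"
  using assms orthonormal_family_independent[OF R]
  by (auto simp: orthonormal_basis_on_def orthonormal_family_def bij_betw_def span_base is_sign_def
      inj_on_def) (metis lessThan_iff)

lemma span_J_invariant:
  assumes RW: "R \<subseteq> W" and gens: "\<And>k r. k < n \<Longrightarrow> r \<in> R \<Longrightarrow> Jb k r \<in> span R"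
    and x: "x \<in> span R"
  shows "J z x \<in> span R"
proof -
  have spanW: "span R \<subseteq> W" using RW subspace_W by (rule span_minimal)
  have J_zero: "J 0 r = 0" if "r \<in> W" for r using J_linear_left[OF that, of 0 0 0 0] by simp
  have Jr: "J z r \<in> span R" if r: "r \<in> R" for r
  proof -
    have rW: "r \<in> W" using r RW by blast
    have "subspace {z. J z r \<in> span R}"
      unfolding subspace_def
      using J_zero[OF rW] J_linear_left[OF rW, of 1 _ 1] J_linear_left[OF rW, of _ _ 0]
      by (simp add: span_zero span_add span_scale)
    moreover have "z \<in> span (zb ` {..<n})" using orthonormal by (simp add: orthonormal_basis_on_def)
    ultimately show ?thesis using span_induct[of z "zb ` {..<n}" "\<lambda>z. J z r \<in> span R"] gens r by blast
  qed
  have "subspace {x. x \<in> W \<and> J z x \<in> span R}"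
    unfolding subspace_def
    using J_scaleR J_add J_scaleR[OF W_zero, of z 0]
    by (simp add: W_zero W_add W_scaleR span_zero span_add span_scale)
  then show ?thesis
    using span_induct[OF x, of "\<lambda>x. x \<in> W \<and> J z x \<in> span R"] Jr RW by blast
qed

lemma admissible_submodule:
  assumes "subspace V" "V \<subseteq> W" "\<And>z x. x \<in> V \<Longrightarrow> J z x \<in> V" "nondegenerate V"
  shows "admissible_module UNIV B V J g"
proof -
  have VW: "x \<in> V \<Longrightarrow> x \<in> W" for x using assms(2) by blast
  show ?thesis
    unfolding admissible_module_def clifford_module_def scalar_product_on_def bilinear_on_def
    using assms(1,3,4) unfolding nondegenerate_def
    by (auto simp: VW J_linear J_linear_left J_square J_skew g_bilinear intro: g_sym)
qed

end

context admissible_rep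
begin

lemma good_orbit_representatives:
  assumes w: "w \<in> W" "g w w \<noteq> 0" "good w"
  obtains R where "orthonormal_family R" "R \<noteq> {}"
    "\<And>k r. k < n \<Longrightarrow> r \<in> R \<Longrightarrow> \<exists>e r'. is_sign e \<and> r' \<in> R \<and> Jb k r = e *\<^sub>R r'"
proof -
  define w0 where "w0 = (1 / sqrt \<bar>g w w\<bar>) *\<^sub>R w"
  have w0W: "w0 \<in> W" and good0: "good w0" using w by (simp_all add: w0_def W_scaleR good_scaleR)
  have "g w0 w0 = g w w / \<bar>g w w\<bar>"
    using w(1) by (simp add: w0_def g_scaleR_left g_scaleR_right W_scaleR)
  then have sign0: "is_sign (g w0 w0)" using w(2) by (auto simp: is_sign_def abs_if)
  define Orb where "Orb = (\<lambda>I. mono I w0) ` Pow {..<n}"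
  obtain R where R: "R \<subseteq> Orb" "\<And>x. x \<in> Orb \<Longrightarrow> \<exists>r\<in>R. x = r \<or> x = - r"
    "\<And>r r'. r \<in> R \<Longrightarrow> r' \<in> R \<Longrightarrow> r' = - r \<Longrightarrow> r' = r"
    using finite_sign_representatives[of Orb] by (auto simp: Orb_def)
  have w0_orbit: "w0 \<in> Orb"
    unfolding Orb_def by (rule image_eqI[of _ _ "{}"]) (simp_all add: mono_empty)
  have "orthonormal_family R"
    unfolding orthonormal_family_def
  proof (intro conjI ballI impI)
    show "R \<subseteq> W" using R(1) w0W by (auto simp: Orb_def mono_in_W)
    show "finite R" using R(1) by (rule finite_subset) (simp add: Orb_def)
  next
    fix x y assume "x \<in> R" "y \<in> R" "x \<noteq> y"
    obtain I where I: "I \<subseteq> {..<n}" "x = mono I w0" using R(1) \<open>x \<in> R\<close> by (auto simp: Orb_def)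
    obtain K where K: "K \<subseteq> {..<n}" "y = mono K w0" using R(1) \<open>y \<in> R\<close> by (auto simp: Orb_def)
    show "g x y = 0"
      using good_orbit_dichotomy[OF w0W good0 I(1) K(1)] R(3)[OF \<open>x \<in> R\<close> \<open>y \<in> R\<close>] \<open>x \<noteq> y\<close> I K
      by auto
  next
    fix x assume "x \<in> R"
    then obtain I where I: "I \<subseteq> {..<n}" "x = mono I w0" using R(1) by (auto simp: Orb_def)
    then obtain s where "is_sign s" "g x x = s * g w0 w0" using mono_norm_sign[OF w0W] by blast
    then show "is_sign (g x x)" using is_sign_mult sign0 by simp
  qed
  moreover have "R \<noteq> {}" using R(2) w0_orbit by blast
  moreover have "\<exists>e r'. is_sign e \<and> r' \<in> R \<and> Jb k r = e *\<^sub>R r'" if "k < n" "r \<in> R" for k r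
  proof -
    obtain I where I: "I \<subseteq> {..<n}" "r = mono I w0" using R(1) \<open>r \<in> R\<close> by (auto simp: Orb_def)
    obtain s where s: "is_sign s" "Jb k r = s *\<^sub>R mono (sym_diff I {k}) w0"
      using Jb_mono[OF \<open>k < n\<close>, of I] I(2) w0W by blast
    have "mono (sym_diff I {k}) w0 \<in> Orb" using I(1) \<open>k < n\<close> by (auto simp: Orb_def)
    then obtain r' where "r' \<in> R" "mono (sym_diff I {k}) w0 = r' \<or> mono (sym_diff I {k}) w0 = - r'"
      using R(2) by blast
    then show ?thesis using s is_sign_uminus[OF s(1)] by (metis scaleR_minus_left scaleR_minus_right)
  qed
  ultimately show ?thesis using that by blast
qed

lemma good_vector_submodule:
  assumes "w \<in> W" "g w w \<noteq> 0" "good w"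
  shows "\<exists>V m vb. admissible_module UNIV B V J g \<and> V \<noteq> {0} \<and> V \<subseteq> W \<and>
           orthonormal_basis_on V g m vb \<and>
           (\<forall>k<n. \<forall>\<alpha><m. \<forall>\<beta><m. g (J (zb k) (vb \<alpha>)) (vb \<beta>) \<in> {1, -1, 0})"
proof -
  obtain R where R: "orthonormal_family R" "R \<noteq> {}"
    and gens: "\<And>k r. k < n \<Longrightarrow> r \<in> R \<Longrightarrow> \<exists>e r'. is_sign e \<and> r' \<in> R \<and> Jb k r = e *\<^sub>R r'"
    using good_orbit_representatives[OF assms] by blast
  have RW: "R \<subseteq> W" and fin: "finite R"
    and orth: "\<And>x y. x \<in> R \<Longrightarrow> y \<in> R \<Longrightarrow> x \<noteq> y \<Longrightarrow> g x y = 0"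
    and sign: "\<And>x. x \<in> R \<Longrightarrow> is_sign (g x x)"
    using R(1) by (auto simp: orthonormal_family_def)
  have spanW: "span R \<subseteq> W" using RW subspace_W by (rule span_minimal)
  have "Jb k r \<in> span R" if "k < n" "r \<in> R" for k r
    using gens[OF that] by (metis span_base span_scale)
  then have "admissible_module UNIV B (span R) J g"
    using spanW span_J_invariant[OF RW] nondegenerate_span_orthonormal_family[OF R(1)]
    by (intro admissible_submodule) auto
  moreover have "span R \<noteq> {0}"
  proof -
    obtain r where "r \<in> R" using R(2) by blast
    moreover have "r \<noteq> 0" using sign[OF \<open>r \<in> R\<close>] g_zero_left[OF W_zero] by (auto simp: is_sign_def)
    ultimately show ?thesis using span_base by blast
  qed
  moreover obtain vb where vb: "bij_betw vb {..<card R} R"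
    using ex_bij_betw_nat_finite[OF fin] by (auto simp: atLeast0LessThan)
  moreover have "g (J (zb k) (vb \<alpha>)) (vb \<beta>) \<in> {1, -1, 0}"
    if "k < n" "\<alpha> < card R" "\<beta> < card R" for k \<alpha> \<beta>
  proof -
    have "vb \<alpha> \<in> R" "vb \<beta> \<in> R" using vb that by (auto simp: bij_betw_def)
    moreover obtain e r where "is_sign e" "r \<in> R" "Jb k (vb \<alpha>) = e *\<^sub>R r"
      using gens[OF \<open>k < n\<close> \<open>vb \<alpha> \<in> R\<close>] by blast
    ultimately show ?thesis
      using orth[of r "vb \<beta>"] sign[of r] RW
      by (cases "r = vb \<beta>") (auto simp: g_scaleR_left is_sign_def subset_iff)
  qed
  ultimately show ?thesis
    using spanW orthonormal_family_basis[OF R(1)] by blast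
qed

lemma submodule_with_sign_matrix:
  assumes "finite S" "W \<subseteq> span S" "W \<noteq> {0}"
  shows "\<exists>V m vb. admissible_module UNIV B V J g \<and> V \<noteq> {0} \<and> V \<subseteq> W \<and>
           orthonormal_basis_on V g m vb \<and>
           (\<forall>k<n. \<forall>\<alpha><m. \<forall>\<beta><m. g (J (zb k) (vb \<alpha>)) (vb \<beta>) \<in> {1, -1, 0})"
  using good_vector_exists[OF assms] good_vector_submodule by blast

end

context orthonormal_basis_setup
begin

lemma exists_minimal_admissible_module:
  "\<exists>(W :: (nat \<Rightarrow> real) set) J g S.
     admissible_module UNIV B W J g \<and> W \<noteq> {0} \<and> finite S \<and> span S = W \<and>
     (\<forall>(W' :: (nat \<Rightarrow> real) set) J' g'.
        admissible_module UNIV B W' J' g' \<and> W' \<noteq> {0} \<and> (\<exists>S. finite S \<and> span S = W')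
        \<longrightarrow> dim W \<le> dim W')"
proof -
  define admissible_fd :: "(nat \<Rightarrow> real) set \<Rightarrow> bool" where
    "admissible_fd W \<longleftrightarrow>
       (\<exists>J g. admissible_module UNIV B W J g \<and> W \<noteq> {0} \<and> (\<exists>S. finite S \<and> span S = W))" for W
  obtain W0 where "admissible_fd W0"
    using exists_finite_admissible_module by (auto simp: admissible_fd_def)
  then obtain W where "admissible_fd W" "\<And>W'. admissible_fd W' \<Longrightarrow> dim W \<le> dim W'"
    using ex_has_least_nat[of admissible_fd W0 dim] by blast
  then show ?thesis unfolding admissible_fd_def by blast
qed

end

theorem theorem1p3:
  fixes B :: "'z::real_vector \<Rightarrow> 'z \<Rightarrow> real"
    and n :: nat and zb :: "nat \<Rightarrow> 'z"
  assumes "scalar_product_on (UNIV :: 'z set) B"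
    and "orthonormal_basis_on (UNIV :: 'z set) B n zb"
  shows "\<exists>(V :: (nat \<Rightarrow> real) set) J g m vb.
           admissible_module UNIV B V J g \<and> V \<noteq> {0} \<and>
           (\<forall>(W :: (nat \<Rightarrow> real) set) J' g'.
              admissible_module UNIV B W J' g' \<and> W \<noteq> {0} \<and>
              (\<exists>S. finite S \<and> span S = W) \<longrightarrow> dim V \<le> dim W) \<and>
           orthonormal_basis_on V g m vb \<and>
           (\<forall>z. \<forall>u\<in>V. \<forall>v\<in>V. g (J z u) (J z v) = B z z * g u v) \<and>
           (\<forall>z. \<forall>u\<in>V. J z (J z u) = - (B z z *\<^sub>R u)) \<and>
           (\<forall>k<n. \<forall>\<alpha><m. \<forall>\<beta><m. g (J (zb k) (vb \<alpha>)) (vb \<beta>) \<in> {1, -1, 0})"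
proof -
  interpret orthonormal_basis_setup B n zb
    using assms by unfold_locales
  obtain W :: "(nat \<Rightarrow> real) set" and J g S where W: "admissible_module UNIV B W J g" "W \<noteq> {0}"
      "finite S" "span S = W"
    and minimal: "\<forall>(W' :: (nat \<Rightarrow> real) set) J' g'. admissible_module UNIV B W' J' g' \<and> W' \<noteq> {0} \<and>
       (\<exists>S. finite S \<and> span S = W') \<longrightarrow> dim W \<le> dim W'"
    using exists_minimal_admissible_module by blast
  interpret admissible_rep B n zb W J g
    using W(1) by unfold_locales
  obtain V m vb where V: "admissible_module UNIV B V J g" "V \<noteq> {0}" "V \<subseteq> W"
      "orthonormal_basis_on V g m vb" "\<forall>k<n. \<forall>\<alpha><m. \<forall>\<beta><m. g (J (zb k) (vb \<alpha>)) (vb \<beta>) \<in> {1, -1, 0}"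
    using submodule_with_sign_matrix[OF W(3) _ W(2)] W(4) by blast
  have "dim V \<le> dim W" using dim_mono_finite_span[OF V(3) W(3)] W(4) by simp
  then have "\<forall>(W' :: (nat \<Rightarrow> real) set) J' g'. admissible_module UNIV B W' J' g' \<and> W' \<noteq> {0} \<and>
      (\<exists>S. finite S \<and> span S = W') \<longrightarrow> dim V \<le> dim W'"
  proof (intro allI impI)
    fix W' :: "(nat \<Rightarrow> real) set" and J' g'
    assume "admissible_module UNIV B W' J' g' \<and> W' \<noteq> {0} \<and> (\<exists>S. finite S \<and> span S = W')"
    then show "dim V \<le> dim W'" using minimal \<open>dim V \<le> dim W\<close> by fastforce
  qed
  moreover have "\<forall>z. \<forall>u\<in>V. \<forall>v\<in>V. g (J z u) (J z v) = B z z * g u v"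
    and "\<forall>z. \<forall>u\<in>V. J z (J z u) = - (B z z *\<^sub>R u)"
    using V(3) J_isometry J_square by blast+
  ultimately show ?thesis using V(1,2,4,5) by blast
qed

end
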